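(* Let $\mathcal{H}$ be a Hilbert space with inner product $\langle\cdot,\cdot\rangle$ and let $\mathcal{A}:\mathcal{H}\to\mathcal{H}$ be a densely defined, possibly unbounded, self-adjoint operator. Let $Q\subset\mathcal{H}$ be a $k$-dimensional subspace ($k\ge2$) of the domain of $\mathcal{A}$ with orthonormal basis $q_1,\ldots,q_k$; let $A_1\in\mathbb{C}^{k\times k}$ have entries $\langle q_i,\mathcal{A}q_j\rangle$, with eigendecomposition $A_1=\Omega\,\mathrm{diag}(\widehat\lambda_1,\ldots,\widehat\lambda_k)\Omega^*$, and let $\widehat u_1,\ldots,\widehat u_k$ be the Ritz vectors $[q_1,\ldots,q_k]\Omega$. Let $(\widehat\lambda,\widehat u)=(\widehat\lambda_1,\widehat u_1)$, $Q_1=\mathrm{span}(\widehat u_1)$, $Q_2=\mathrm{span}(\widehat u_2,\ldots,\widehat u_k)$, $Q_3=Q^\perp$, let $\mathcal{P}_j$ be the orthogonal projector onto $Q_j$, $\mathcal{P}_{2,i}$ the orthogonal projector onto $\mathrm{span}(\widehat u_i)$ ($i=2,\ldots,k$), and $\mathcal{A}_{jl}=\mathcal{P}_j\mathcal{A}\mathcal{P}_l$. Set $\|R\|=\|\mathcal{A}_{31}+\mathcal{A}_{32}\|$, $\|R_1\|=\|\mathcal{A}_{31}\|$, $\|R_2\|=\|\mathcal{A}_{32}\|$, $\|r_i\|=\|\mathcal{A}_{32}\mathcal{P}_{2,i}\|$. Suppose $\mathcal{A}u=\lambda u$ with $\|u\|=1$, and define $\mathrm{gap}=\min|\lambda-\lambda(\mathcal{A}_{22})|$,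 $\mathrm{Gap}=\min|\lambda-\lambda(\mathcal{A}_{33})|$. Then $$\sin\angle(u,\widehat u)\le\frac{\|R\|}{\mathrm{Gap}}\sqrt{1+\frac{\|R_2\|^2}{\mathrm{gap}^2}}\ \le\ \frac{\|R\|}{\mathrm{Gap}}\Big(1+\frac{\|R_2\|}{\mathrm{gap}}\Big).$$ Moreover, if $\mathrm{Gap}>\|R_2\|^2/\mathrm{gap}$, then $$\sin\angle(u,\widehat u)\le\frac{\|R_1\|}{\mathrm{Gap}-\frac{\|R_2\|^2}{\mathrm{gap}}}\sqrt{1+\frac{\|R_2\|^2}{\mathrm{gap}^2}},$$ and if $\mathrm{Gap}>\sum_{i=2}^k\frac{\|r_i\|^2}{|\lambda-\widehat\lambda_i|}$, then $$\sin\angle(u,\widehat u)\le\frac{\|R_1\|}{\mathrm{Gap}-\sum_{i=2}^k\frac{\|r_i\|^2}{|\lambda-\widehat\lambda_i|}}\sqrt{1+\Big(\sum_{i=2}^k\frac{\|r_i\|}{|\lambda-\widehat\lambda_i|}\Big)^2}.$$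
   Context: $\|\cdot\|$ denotes the norm of $\mathcal{H}$ and the operator norm. $\lambda(\mathcal{A}_{jj})$ denotes the spectrum of the restriction of $\mathcal{A}_{jj}$ to $Q_j$, and $\min|\lambda-\lambda(\mathcal{A}_{jj})|$ is the distance from $\lambda$ to that spectrum. For unit vectors, $\angle(u,\widehat u)=\arccos|\langle\widehat u,u\rangle|$. A bound with a vanishing denominator is interpreted as $+\infty$. *)

theory Defs
  imports "HOL-Analysis.Analysis"
begin

class complex_vector = real_vector +
  fixes scaleC :: "complex \<Rightarrow> 'a \<Rightarrow> 'a" (infixr \<open>*\<^sub>C\<close> 75)
  assumes scaleC_add_right: "a *\<^sub>C (x + y) = a *\<^sub>C x + a *\<^sub>C y"
    and scaleC_add_left: "(a + b) *\<^sub>C x = a *\<^sub>C x + b *\<^sub>C x"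
    and scaleC_scaleC: "a *\<^sub>C (b *\<^sub>C x) = (a * b) *\<^sub>C x"
    and scaleC_one: "1 *\<^sub>C x = x"
    and scaleR_scaleC: "scaleR r x = complex_of_real r *\<^sub>C x"

class complex_inner = complex_vector + real_normed_vector +
  fixes cinner :: "'a \<Rightarrow> 'a \<Rightarrow> complex"
  assumes cinner_commute: "cinner x y = cnj (cinner y x)"
    and cinner_add_right: "cinner x (y + z) = cinner x y + cinner x z"
    and cinner_scaleC_right: "cinner x (a *\<^sub>C y) = a * cinner x y"
    and cinner_ge_zero: "0 \<le> Re (cinner x x)"
    and cinner_eq_zero_iff: "cinner x x = 0 \<longleftrightarrow> x = 0"
    and norm_eq_sqrt_cinner: "norm x = sqrt (Re (cinner x x))"

text \<open>A (complex) Hilbert space is a type of class of class complex_inner and complete_space.\<close>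

definition csubspace :: "'a::complex_vector set \<Rightarrow> bool" where
  "csubspace S \<longleftrightarrow> 0 \<in> S \<and> (\<forall>x\<in>S. \<forall>y\<in>S. x + y \<in> S) \<and> (\<forall>a. \<forall>x\<in>S. a *\<^sub>C x \<in> S)"

definition cspan :: "'a::complex_vector set \<Rightarrow> 'a set" where
  "cspan S = {x. \<exists>F c. finite F \<and> F \<subseteq> S \<and> x = (\<Sum>v\<in>F. c v *\<^sub>C v)}"

definition orth_compl :: "'a::complex_inner set \<Rightarrow> 'a set" where
  "orth_compl S = {x. \<forall>y\<in>S. cinner y x = 0}"

definition orth_proj :: "'a::complex_inner set \<Rightarrow> 'a \<Rightarrow> 'a" where
  "orth_proj S x = (THE p. p \<in> S \<and> (\<forall>s\<in>S. cinner s (x - p) = 0))"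

definition densely_defined_linear :: "'a::complex_inner set \<Rightarrow> ('a \<Rightarrow> 'a) \<Rightarrow> bool" where
  "densely_defined_linear D A \<longleftrightarrow> csubspace D \<and> closure D = UNIV \<and>
     (\<forall>x\<in>D. \<forall>y\<in>D. \<forall>a b. A (a *\<^sub>C x + b *\<^sub>C y) = a *\<^sub>C A x + b *\<^sub>C A y)"

text \<open>Self-adjointness A = A*: A is symmetric on D and the domain of the adjoint
  (all y for which x \<mapsto> <y, A x> is represented by some z) is contained in D.\<close>
definition self_adjoint_op :: "'a::complex_inner set \<Rightarrow> ('a \<Rightarrow> 'a) \<Rightarrow> bool" where
  "self_adjoint_op D A \<longleftrightarrow> densely_defined_linear D A \<and>
     (\<forall>x\<in>D. \<forall>y\<in>D. cinner (A x) y = cinner x (A y)) \<and>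
     (\<forall>y z. (\<forall>x\<in>D. cinner y (A x) = cinner z x) \<longrightarrow> y \<in> D)"

text \<open>Spectrum of the operator T with domain Dom, acting in the (closed) subspace V:
  mu is in the resolvent set iff T - mu maps Dom bijectively onto V with bounded inverse.\<close>
definition op_spectrum :: "'a::complex_inner set \<Rightarrow> 'a set \<Rightarrow> ('a \<Rightarrow> 'a) \<Rightarrow> complex set" where
  "op_spectrum V Dom T = {\<mu>. \<not> ((\<forall>y\<in>V. \<exists>!x. x \<in> Dom \<and> T x - \<mu> *\<^sub>C x = y) \<and>
                                   (\<exists>C. \<forall>x\<in>Dom. norm x \<le> C * norm (T x - \<mu> *\<^sub>C x)))}"

text \<open>Distance from a point to a set of complex numbers (min |lambda - lambda(.)|).
  For the empty set we put 0, so that the bounds having it as denominator are +infinity.\<close>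
definition spec_dist :: "complex \<Rightarrow> complex set \<Rightarrow> real" where
  "spec_dist z S = (if S = {} then 0 else Inf ((\<lambda>\<mu>. cmod (z - \<mu>)) ` S))"

definition vangle :: "'a::complex_inner \<Rightarrow> 'a \<Rightarrow> real" where
  "vangle u uh = arccos (cmod (cinner uh u))"

end

(* Decompose the eigenvector as u = P1 u + P2 u + P3 u along Q1, Q2, Q3, so that
   sin^2 angle(u, ritz 1) = |P2 u|^2 + |P3 u|^2.  The Ritz vectors diagonalize the compression of A
   to Q, so A12 = A21 = 0, and projecting A u = lam u onto Q3 and Q2 gives
     (A33 - lam) P3 u = - (A31 + A32) u   and   (A22 - lam) P2 u = - A23 P3 u.
   For a symmetric compression T and real lam, |(T - lam) x| >= dist(lam, spectrum T) |x|;
   hence Gap |P3 u| <= |R| and gap |P2 u| <= |R2| |P3 u|, and the bounds follow.  The refined bounds expand P2 u in the Ritz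
   vectors, whose coefficients satisfy (lam - lh i) <ritz i, u> = <resid i, P3 u>. *)

theory Submission
  imports Defs "Jordan_Normal_Form.Determinant"
begin

section \<open>Complex inner product spaces\<close>

lemma scaleC_zero_right [simp]: "a *\<^sub>C (0::'a::complex_vector) = 0"
proof -
  have "a *\<^sub>C (0::'a) + a *\<^sub>C 0 = a *\<^sub>C 0 + 0" using scaleC_add_right[of a "0::'a" 0] by simp
  then show ?thesis by simp
qed

lemma scaleC_zero_left [simp]: "0 *\<^sub>C (x::'a::complex_vector) = 0"
proof -
  have "0 *\<^sub>C x + 0 *\<^sub>C x = 0 *\<^sub>C x + 0" using scaleC_add_left[of 0 0 x] by simp
  then show ?thesis by simp
qed

declare scaleC_one [simp] scaleC_scaleC [simp]

lemma scaleC_minus_left: "(- a) *\<^sub>C (x::'a::complex_vector) = - (a *\<^sub>C x)"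
  using scaleC_add_left[of a "- a" x] by (simp add: eq_neg_iff_add_eq_0 add.commute)

lemma scaleC_minus_right: "a *\<^sub>C (- x) = - (a *\<^sub>C (x::'a::complex_vector))"
  using scaleC_add_right[of a x "- x"] by (simp add: eq_neg_iff_add_eq_0 add.commute)

lemma scaleC_diff_right: "a *\<^sub>C (x - y) = a *\<^sub>C x - a *\<^sub>C (y::'a::complex_vector)"
  using scaleC_add_right[of a x "- y"] by (simp add: scaleC_minus_right)

lemma scaleC_sum_right: "a *\<^sub>C (\<Sum>i\<in>I. f i) = (\<Sum>i\<in>I. a *\<^sub>C (f i::'a::complex_vector))"
  by (induct I rule: infinite_finite_induct) (auto simp: scaleC_add_right)

lemma scaleC_sum_left: "(\<Sum>i\<in>I. c i) *\<^sub>C x = (\<Sum>i\<in>I. c i *\<^sub>C (x::'a::complex_vector))"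
  by (induct I rule: infinite_finite_induct) (auto simp: scaleC_add_left)

lemma cinner_add_left: "cinner (x + y) z = cinner x z + cinner y (z::'a::complex_inner)"
  by (metis cinner_add_right cinner_commute complex_cnj_add)

lemma cinner_scaleC_left: "cinner (a *\<^sub>C x) y = cnj a * cinner x (y::'a::complex_inner)"
  by (metis cinner_scaleC_right cinner_commute complex_cnj_mult)

lemma cinner_zero_right [simp]: "cinner x (0::'a::complex_inner) = 0"
  using cinner_scaleC_right[of x 0 0] by simp

lemma cinner_zero_left [simp]: "cinner (0::'a::complex_inner) x = 0"
  using cinner_scaleC_left[of 0 0 x] by simp

lemma cinner_minus_right: "cinner x (- y) = - cinner x (y::'a::complex_inner)"
  using cinner_scaleC_right[of x "- 1" y] by (simp add: scaleC_minus_left)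

lemma cinner_minus_left: "cinner (- x) y = - cinner x (y::'a::complex_inner)"
  using cinner_scaleC_left[of "- 1" x y] by (simp add: scaleC_minus_left)

lemma cinner_diff_right: "cinner x (y - z) = cinner x y - cinner x (z::'a::complex_inner)"
  using cinner_add_right[of x y "- z"] by (simp add: cinner_minus_right)

lemma cinner_diff_left: "cinner (x - y) z = cinner x z - cinner y (z::'a::complex_inner)"
  using cinner_add_left[of x "- y" z] by (simp add: cinner_minus_left)

lemma cinner_sum_right: "cinner x (\<Sum>i\<in>I. f i) = (\<Sum>i\<in>I. cinner x (f i::'a::complex_inner))"
  by (induct I rule: infinite_finite_induct) (auto simp: cinner_add_right)

lemma cinner_sum_left: "cinner (\<Sum>i\<in>I. f i) x = (\<Sum>i\<in>I. cinner (f i::'a::complex_inner) x)"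
  by (induct I rule: infinite_finite_induct) (auto simp: cinner_add_left)

lemma cinner_zero_commute: "cinner x y = 0 \<longleftrightarrow> cinner y (x::'a::complex_inner) = 0"
  by (metis cinner_commute complex_cnj_zero_iff)

lemma cinner_self: "cinner x x = complex_of_real ((norm (x::'a::complex_inner))\<^sup>2)"
proof -
  have "Im (cinner x x) = 0"
    using cinner_commute[of x x] by (metis Reals_cnj_iff complex_is_Real_iff)
  moreover have "Re (cinner x x) = (norm x)\<^sup>2"
    using norm_eq_sqrt_cinner[of x] cinner_ge_zero[of x] by simp
  ultimately show ?thesis by (simp add: complex_eq_iff)
qed

lemma norm_sq_cinner: "(norm (x::'a::complex_inner))\<^sup>2 = Re (cinner x x)"
  by (simp add: cinner_self)

lemma norm_scaleC [simp]: "norm (a *\<^sub>C (x::'a::complex_inner)) = cmod a * norm x"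
proof -
  have ca: "cnj a * a = complex_of_real ((cmod a)\<^sup>2)"
    using complex_norm_square[of a] by (simp add: mult.commute)
  have e: "cinner (a *\<^sub>C x) (a *\<^sub>C x) = cnj a * a * cinner x x"
    by (simp add: cinner_scaleC_left cinner_scaleC_right mult.assoc)
  have "(norm (a *\<^sub>C x))\<^sup>2 = Re (cnj a * a * cinner x x)"
    unfolding norm_sq_cinner e by (rule refl)
  also have "\<dots> = (cmod a * norm x)\<^sup>2"
    unfolding ca cinner_self by (simp add: power_mult_distrib)
  finally show ?thesis by (simp add: power2_eq_iff_nonneg)
qed

lemma norm_add_sq: "(norm (x + y))\<^sup>2 = (norm x)\<^sup>2 + (norm y)\<^sup>2 + 2 * Re (cinner x (y::'a::complex_inner))"
proof -
  have "Re (cinner y x) = Re (cinner x y)" using cinner_commute[of y x] by simp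
  then show ?thesis by (simp add: norm_sq_cinner cinner_add_left cinner_add_right)
qed

lemma norm_diff_sq: "(norm (x - y))\<^sup>2 = (norm x)\<^sup>2 + (norm y)\<^sup>2 - 2 * Re (cinner x (y::'a::complex_inner))"
  using norm_add_sq[of x "- y"] by (simp add: cinner_minus_right)

lemma norm_add_sq_orthogonal:
  "cinner x y = 0 \<Longrightarrow> (norm (x + y))\<^sup>2 = (norm x)\<^sup>2 + (norm (y::'a::complex_inner))\<^sup>2"
  by (simp add: norm_add_sq)

lemma Cauchy_Schwarz_cinner: "cmod (cinner x y) \<le> norm x * norm (y::'a::complex_inner)"
proof (cases "x = 0")
  case False
  then have nx: "norm x > 0" by simp
  define c where "c = cinner x y / complex_of_real ((norm x)\<^sup>2)"
  define z where "z = y - c *\<^sub>C x"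
  have "cinner x z = 0"
    using nx by (simp add: z_def c_def cinner_diff_right cinner_scaleC_right cinner_self)
  then have "cinner z (c *\<^sub>C x) = 0"
    by (simp add: cinner_scaleC_right cinner_zero_commute)
  moreover have "y = z + c *\<^sub>C x" by (simp add: z_def)
  ultimately have "(norm y)\<^sup>2 = (norm z)\<^sup>2 + (cmod c * norm x)\<^sup>2"
    using norm_add_sq_orthogonal by fastforce
  then have "(cmod c * norm x)\<^sup>2 \<le> (norm y)\<^sup>2" by simp
  then have "cmod c * norm x \<le> norm y" by (simp add: power2_le_iff_abs_le)
  moreover have "cmod c = cmod (cinner x y) / (norm x)\<^sup>2"
    unfolding c_def norm_divide by (simp only: norm_of_real abs_power2)
  then have "cmod c * norm x = cmod (cinner x y) / norm x"
    using nx by (simp add: power2_eq_square)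
  ultimately show ?thesis using nx by (simp add: divide_le_eq mult.commute)
qed simp

lemma csubspace_0: "csubspace V \<Longrightarrow> 0 \<in> V"
  unfolding csubspace_def by blast

lemma csubspace_add: "csubspace V \<Longrightarrow> x \<in> V \<Longrightarrow> y \<in> V \<Longrightarrow> x + y \<in> V"
  unfolding csubspace_def by blast

lemma csubspace_scaleC: "csubspace V \<Longrightarrow> x \<in> V \<Longrightarrow> a *\<^sub>C x \<in> V"
  unfolding csubspace_def by blast

lemma csubspace_diff: "csubspace V \<Longrightarrow> x \<in> V \<Longrightarrow> y \<in> V \<Longrightarrow> x - y \<in> V"
  using csubspace_add[of V x "(- 1) *\<^sub>C y"] csubspace_scaleC[of V y "- 1"]
  by (simp add: scaleC_minus_left)

lemma csubspace_sum: "csubspace V \<Longrightarrow> (\<And>i. i \<in> I \<Longrightarrow> f i \<in> V) \<Longrightarrow> (\<Sum>i\<in>I. f i) \<in> V"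
  by (induct I rule: infinite_finite_induct) (auto simp: csubspace_0 csubspace_add)

lemma csubspace_Int: "csubspace A \<Longrightarrow> csubspace B \<Longrightarrow> csubspace (A \<inter> B)"
  unfolding csubspace_def by blast

lemma csubspace_UNIV: "csubspace UNIV"
  unfolding csubspace_def by blast

lemma csubspace_orth_compl: "csubspace (orth_compl S)"
  unfolding csubspace_def orth_compl_def by (auto simp: cinner_add_right cinner_scaleC_right)

definition clinear_on :: "'a::complex_vector set \<Rightarrow> ('a \<Rightarrow> 'b::complex_vector) \<Rightarrow> bool" where
  "clinear_on V f \<longleftrightarrow> (\<forall>x\<in>V. \<forall>y\<in>V. \<forall>a b. f (a *\<^sub>C x + b *\<^sub>C y) = a *\<^sub>C f x + b *\<^sub>C f y)"

definition symmetric_on :: "'a::complex_inner set \<Rightarrow> ('a \<Rightarrow> 'a) \<Rightarrow> bool" where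
  "symmetric_on V T \<longleftrightarrow> (\<forall>x\<in>V. \<forall>y\<in>V. cinner (T x) y = cinner x (T y))"

lemma clinear_onD:
  "clinear_on V f \<Longrightarrow> x \<in> V \<Longrightarrow> y \<in> V \<Longrightarrow> f (a *\<^sub>C x + b *\<^sub>C y) = a *\<^sub>C f x + b *\<^sub>C f y"
  unfolding clinear_on_def by blast

lemma symmetric_onD: "symmetric_on V T \<Longrightarrow> x \<in> V \<Longrightarrow> y \<in> V \<Longrightarrow> cinner (T x) y = cinner x (T y)"
  unfolding symmetric_on_def by blast

lemma clinear_on_scaleC: "clinear_on V f \<Longrightarrow> x \<in> V \<Longrightarrow> f (a *\<^sub>C x) = a *\<^sub>C f x"
  using clinear_onD[of V f x x a 0] by simp

lemma clinear_on_add: "clinear_on V f \<Longrightarrow> x \<in> V \<Longrightarrow> y \<in> V \<Longrightarrow> f (x + y) = f x + f y"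
  using clinear_onD[of V f x y 1 1] by simp

lemma clinear_on_sum:
  assumes "clinear_on V f" "csubspace V" "finite J" "\<And>j. j \<in> J \<Longrightarrow> y j \<in> V"
  shows "f (\<Sum>j\<in>J. c j *\<^sub>C y j) = (\<Sum>j\<in>J. c j *\<^sub>C f (y j))"
  using assms(3,4)
proof (induct J rule: finite_induct)
  case empty
  show ?case using clinear_on_scaleC[OF assms(1) csubspace_0[OF assms(2)], of 0] by simp
next
  case (insert j J)
  then have "(\<Sum>j\<in>J. c j *\<^sub>C y j) \<in> V"
    using assms(2) by (auto intro!: csubspace_sum csubspace_scaleC)
  with insert show ?case
    using assms(1,2) by (simp add: clinear_on_add clinear_on_scaleC csubspace_scaleC)
qed

lemma
  assumes sa: "self_adjoint_op D A"
  shows self_adjoint_op_csubspace: "csubspace D"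
    and self_adjoint_op_clinear_on: "clinear_on D A"
    and self_adjoint_op_symmetric_on: "symmetric_on D A"
  using sa unfolding self_adjoint_op_def densely_defined_linear_def clinear_on_def symmetric_on_def
  by auto

section \<open>Orthonormal families and orthogonal projectors\<close>

definition orthonormal_on :: "'b set \<Rightarrow> ('b \<Rightarrow> 'a::complex_inner) \<Rightarrow> bool" where
  "orthonormal_on I f \<longleftrightarrow> (\<forall>i\<in>I. \<forall>j\<in>I. cinner (f i) (f j) = (if i = j then 1 else 0))"

lemma orthonormal_on_subset: "orthonormal_on I f \<Longrightarrow> J \<subseteq> I \<Longrightarrow> orthonormal_on J f"
  unfolding orthonormal_on_def by blast

lemma orthonormal_on_norm: "orthonormal_on I f \<Longrightarrow> i \<in> I \<Longrightarrow> norm (f i) = 1"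
  using norm_eq_sqrt_cinner[of "f i"] by (simp add: orthonormal_on_def)

lemma cinner_orthonormal_sum:
  assumes "orthonormal_on I f" "finite I" "j \<in> I"
  shows "cinner (f j) (\<Sum>i\<in>I. c i *\<^sub>C f i) = c j"
proof -
  have "cinner (f j) (\<Sum>i\<in>I. c i *\<^sub>C f i) = (\<Sum>i\<in>I. if i = j then c i else 0)"
    using assms(1,3) by (auto simp: cinner_sum_right cinner_scaleC_right orthonormal_on_def intro!: sum.cong)
  then show ?thesis using assms(2,3) by simp
qed

lemma generator_in_cspan: "x \<in> S \<Longrightarrow> x \<in> cspan S"
  unfolding cspan_def by (rule CollectI, rule exI[of _ "{x}"], rule exI[of _ "\<lambda>_. 1"]) simp

lemma sum_scaleC_in_cspan:
  assumes "finite I"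
  shows "(\<Sum>i\<in>I. c i *\<^sub>C f i) \<in> cspan (f ` I)"
proof -
  have "(\<Sum>i\<in>I. c i *\<^sub>C f i) = (\<Sum>v\<in>f ` I. \<Sum>i\<in>{i\<in>I. f i = v}. c i *\<^sub>C f i)"
    by (rule sum.image_gen[OF assms])
  also have "\<dots> = (\<Sum>v\<in>f ` I. (\<Sum>i\<in>{i\<in>I. f i = v}. c i) *\<^sub>C v)"
    by (intro sum.cong refl) (auto simp: scaleC_sum_left)
  finally show ?thesis
    unfolding cspan_def using assms
    by (intro CollectI exI[of _ "f ` I"] exI[of _ "\<lambda>v. \<Sum>i\<in>{i\<in>I. f i = v}. c i"]) simp
qed

lemma cspan_orthonormal_repr:
  assumes ON: "orthonormal_on I f" and fin: "finite I" and s: "s \<in> cspan (f ` I)"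
  shows "s = (\<Sum>i\<in>I. cinner (f i) s *\<^sub>C f i)"
proof -
  obtain F c where F: "F \<subseteq> f ` I" and sF: "s = (\<Sum>v\<in>F. c v *\<^sub>C v)"
    using s unfolding cspan_def by blast
  have generator: "(\<Sum>i\<in>I. cinner (f i) v *\<^sub>C f i) = v" if "v \<in> f ` I" for v
  proof -
    obtain j where j: "j \<in> I" "v = f j" using \<open>v \<in> f ` I\<close> by blast
    then have "(\<Sum>i\<in>I. cinner (f i) v *\<^sub>C f i) = (\<Sum>i\<in>I. if i = j then f i else 0)"
      using ON by (intro sum.cong) (auto simp: orthonormal_on_def)
    then show ?thesis using fin j by simp
  qed
  have "(\<Sum>i\<in>I. cinner (f i) s *\<^sub>C f i) = (\<Sum>v\<in>F. c v *\<^sub>C (\<Sum>i\<in>I. cinner (f i) v *\<^sub>C f i))"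
    unfolding sF by (simp add: cinner_sum_right cinner_scaleC_right scaleC_sum_left scaleC_sum_right)
      (rule sum.swap)
  also have "\<dots> = s" using F generator by (simp add: sF subset_iff)
  finally show ?thesis by simp
qed

lemma cinner_cspan_orthonormal_eq_0:
  assumes "orthonormal_on I f" "finite I" "s \<in> cspan (f ` I)" "\<And>i. i \<in> I \<Longrightarrow> cinner (f i) y = 0"
  shows "cinner s y = 0"
  by (subst cspan_orthonormal_repr[OF assms(1-3)]) (simp add: cinner_sum_left cinner_scaleC_left assms(4))

lemma csubspace_cspan_orthonormal:
  assumes ON: "orthonormal_on I f" and fin: "finite I"
  shows "csubspace (cspan (f ` I))"
  unfolding csubspace_def
proof safe
  show "0 \<in> cspan (f ` I)" using sum_scaleC_in_cspan[OF fin, of "\<lambda>_. 0"] by simp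
  fix x y assume x: "x \<in> cspan (f ` I)" and y: "y \<in> cspan (f ` I)"
  have "x + y = (\<Sum>i\<in>I. (cinner (f i) x + cinner (f i) y) *\<^sub>C f i)"
    by (subst cspan_orthonormal_repr[OF ON fin x], subst cspan_orthonormal_repr[OF ON fin y])
      (simp add: scaleC_add_left sum.distrib)
  then show "x + y \<in> cspan (f ` I)" using sum_scaleC_in_cspan[OF fin] by simp
next
  fix a x assume x: "x \<in> cspan (f ` I)"
  have "a *\<^sub>C x = (\<Sum>i\<in>I. (a * cinner (f i) x) *\<^sub>C f i)"
    by (subst cspan_orthonormal_repr[OF ON fin x]) (simp add: scaleC_sum_right)
  then show "a *\<^sub>C x \<in> cspan (f ` I)" using sum_scaleC_in_cspan[OF fin] by simp
qed

text \<open>The projector onto S is only meaningful (the \<open>THE\<close> in \<open>orth_proj\<close> is only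
  determined) when every vector has an orthogonal decomposition along S.\<close>

definition has_orth_proj :: "'a::complex_inner set \<Rightarrow> bool" where
  "has_orth_proj S \<longleftrightarrow> csubspace S \<and> (\<forall>x. \<exists>p\<in>S. \<forall>s\<in>S. cinner s (x - p) = 0)"

lemma orth_proj_eqI:
  assumes S: "csubspace S" and p: "p \<in> S" and orth: "\<And>s. s \<in> S \<Longrightarrow> cinner s (x - p) = 0"
  shows "orth_proj S x = p"
  unfolding orth_proj_def
proof (rule the_equality)
  fix p' assume p': "p' \<in> S \<and> (\<forall>s\<in>S. cinner s (x - p') = 0)"
  have w: "p - p' \<in> S" using p p' S by (simp add: csubspace_diff)
  have "cinner (p - p') (p - p') = cinner (p - p') (x - p') - cinner (p - p') (x - p)"
    by (simp add: cinner_diff_right)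
  also have "\<dots> = 0" using p' orth[OF w] w by simp
  finally show "p' = p" using cinner_eq_zero_iff[of "p - p'"] by simp
qed (use p orth in blast)

lemma
  assumes "has_orth_proj S"
  shows orth_proj_in: "orth_proj S x \<in> S"
    and orth_proj_orthogonal: "s \<in> S \<Longrightarrow> cinner s (x - orth_proj S x) = 0"
proof -
  obtain p where p: "p \<in> S" "\<forall>s\<in>S. cinner s (x - p) = 0"
    using assms unfolding has_orth_proj_def by blast
  moreover have "orth_proj S x = p"
    using assms p by (intro orth_proj_eqI) (auto simp: has_orth_proj_def)
  ultimately show "orth_proj S x \<in> S" "s \<in> S \<Longrightarrow> cinner s (x - orth_proj S x) = 0" by auto
qed

lemma orth_proj_id: "has_orth_proj S \<Longrightarrow> y \<in> S \<Longrightarrow> orth_proj S y = y"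
  by (rule orth_proj_eqI) (auto simp: has_orth_proj_def)

lemma orth_proj_cinner_right: "has_orth_proj S \<Longrightarrow> w \<in> S \<Longrightarrow> cinner w (orth_proj S z) = cinner w z"
  using orth_proj_orthogonal[of S w z] by (simp add: cinner_diff_right)

lemma orth_proj_cinner_left: "has_orth_proj S \<Longrightarrow> w \<in> S \<Longrightarrow> cinner (orth_proj S z) w = cinner z w"
  using orth_proj_cinner_right[of S w z] by (metis cinner_commute)

lemma orth_proj_clinear_on:
  assumes S: "has_orth_proj S"
  shows "clinear_on UNIV (orth_proj S)"
  unfolding clinear_on_def
proof (intro ballI allI)
  fix x y a b
  have S': "csubspace S" using S by (simp add: has_orth_proj_def)
  have "(a *\<^sub>C x + b *\<^sub>C y) - (a *\<^sub>C orth_proj S x + b *\<^sub>C orth_proj S y)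
        = a *\<^sub>C (x - orth_proj S x) + b *\<^sub>C (y - orth_proj S y)"
    by (simp add: scaleC_diff_right algebra_simps)
  then show "orth_proj S (a *\<^sub>C x + b *\<^sub>C y) = a *\<^sub>C orth_proj S x + b *\<^sub>C orth_proj S y"
    by (intro orth_proj_eqI[OF S'] csubspace_add[OF S'] csubspace_scaleC[OF S'] orth_proj_in[OF S])
      (simp add: cinner_add_right cinner_scaleC_right orth_proj_orthogonal[OF S])
qed

lemma orthonormal_decomposition:
  assumes ON: "orthonormal_on I f" and fin: "finite I"
  shows "(\<Sum>i\<in>I. cinner (f i) x *\<^sub>C f i) \<in> cspan (f ` I)"
    and "x - (\<Sum>i\<in>I. cinner (f i) x *\<^sub>C f i) \<in> orth_compl (cspan (f ` I))"
proof -
  show "(\<Sum>i\<in>I. cinner (f i) x *\<^sub>C f i) \<in> cspan (f ` I)" by (rule sum_scaleC_in_cspan[OF fin])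
  have "cinner (f j) (x - (\<Sum>i\<in>I. cinner (f i) x *\<^sub>C f i)) = 0" if "j \<in> I" for j
    using cinner_orthonormal_sum[OF ON fin that] by (simp add: cinner_diff_right)
  then show "x - (\<Sum>i\<in>I. cinner (f i) x *\<^sub>C f i) \<in> orth_compl (cspan (f ` I))"
    unfolding orth_compl_def using cinner_cspan_orthonormal_eq_0[OF ON fin] by blast
qed

lemma
  assumes ON: "orthonormal_on I f" and fin: "finite I"
  shows has_orth_proj_cspan_orthonormal: "has_orth_proj (cspan (f ` I))"
    and orth_proj_cspan_orthonormal: "orth_proj (cspan (f ` I)) x = (\<Sum>i\<in>I. cinner (f i) x *\<^sub>C f i)"
proof -
  have orth: "cinner s (y - (\<Sum>i\<in>I. cinner (f i) y *\<^sub>C f i)) = 0" if "s \<in> cspan (f ` I)" for s y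
    using that orthonormal_decomposition(2)[OF ON fin, of y] by (simp add: orth_compl_def)
  show "has_orth_proj (cspan (f ` I))"
    using orth orthonormal_decomposition(1)[OF ON fin] csubspace_cspan_orthonormal[OF ON fin]
    unfolding has_orth_proj_def by blast
  show "orth_proj (cspan (f ` I)) x = (\<Sum>i\<in>I. cinner (f i) x *\<^sub>C f i)"
    by (intro orth_proj_eqI csubspace_cspan_orthonormal[OF ON fin] orthonormal_decomposition(1)[OF ON fin] orth)
qed

lemma
  assumes ON: "orthonormal_on I f" and fin: "finite I"
  shows has_orth_proj_orth_compl_cspan_orthonormal: "has_orth_proj (orth_compl (cspan (f ` I)))"
    and orth_proj_orth_compl_cspan_orthonormal:
      "orth_proj (orth_compl (cspan (f ` I))) x = x - (\<Sum>i\<in>I. cinner (f i) x *\<^sub>C f i)"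
proof -
  have orth: "cinner s (y - (y - (\<Sum>i\<in>I. cinner (f i) y *\<^sub>C f i))) = 0"
    if "s \<in> orth_compl (cspan (f ` I))" for s y
  proof -
    have "cinner (\<Sum>i\<in>I. cinner (f i) y *\<^sub>C f i) s = 0"
      using that orthonormal_decomposition(1)[OF ON fin, of y] by (simp add: orth_compl_def)
    then show ?thesis by (simp add: cinner_zero_commute)
  qed
  show "has_orth_proj (orth_compl (cspan (f ` I)))"
    using orth orthonormal_decomposition(2)[OF ON fin] csubspace_orth_compl
    unfolding has_orth_proj_def by blast
  show "orth_proj (orth_compl (cspan (f ` I))) x = x - (\<Sum>i\<in>I. cinner (f i) x *\<^sub>C f i)"
    by (intro orth_proj_eqI csubspace_orth_compl orthonormal_decomposition(2)[OF ON fin] orth)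
qed

lemma
  assumes S: "has_orth_proj S"
  shows compression_clinear_on: "clinear_on D A \<Longrightarrow> clinear_on (D \<inter> S) (\<lambda>x. orth_proj S (A (orth_proj S x)))"
    and compression_symmetric_on: "symmetric_on D A \<Longrightarrow> symmetric_on (D \<inter> S) (\<lambda>x. orth_proj S (A (orth_proj S x)))"
proof -
  have P_lin: "orth_proj S (a *\<^sub>C x + b *\<^sub>C y) = a *\<^sub>C orth_proj S x + b *\<^sub>C orth_proj S y" for a b x y
    using orth_proj_clinear_on[OF S] by (simp add: clinear_on_def)
  show "clinear_on D A \<Longrightarrow> clinear_on (D \<inter> S) (\<lambda>x. orth_proj S (A (orth_proj S x)))"
    using S by (auto simp: clinear_on_def P_lin orth_proj_id has_orth_proj_def csubspace_add csubspace_scaleC)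
  show "symmetric_on D A \<Longrightarrow> symmetric_on (D \<inter> S) (\<lambda>x. orth_proj S (A (orth_proj S x)))"
    using S by (auto simp: symmetric_on_def orth_proj_id orth_proj_cinner_left orth_proj_cinner_right)
qed

lemma
  fixes f :: "'a::real_normed_vector \<Rightarrow> 'b::real_normed_vector"
  assumes B: "\<And>x. norm (f x) \<le> B * norm x"
  shows norm_le_onorm_of_bound: "norm (f x) \<le> onorm f * norm x"
    and onorm_nonneg_of_bound: "0 \<le> onorm f"
proof -
  have bdd: "bdd_above (range (\<lambda>x. norm (f x) / norm x))"
  proof (rule bdd_aboveI[of _ "max B 0"])
    fix t assume "t \<in> range (\<lambda>x. norm (f x) / norm x)"
    then obtain y where t: "t = norm (f y) / norm y" by auto
    show "t \<le> max B 0"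
    proof (cases "y = 0")
      case False
      then have "norm (f y) / norm y \<le> B" using B[of y] by (simp add: divide_le_eq)
      then show ?thesis using t by simp
    qed (use t in simp)
  qed
  have "0 \<le> norm (f 0) / norm (0::'a)" by simp
  also have "\<dots> \<le> onorm f" unfolding onorm_def by (rule cSUP_upper[OF UNIV_I bdd])
  finally show "0 \<le> onorm f" .
  show "norm (f x) \<le> onorm f * norm x"
  proof (cases "x = 0")
    case False
    have "norm (f x) / norm x \<le> onorm f" unfolding onorm_def by (rule cSUP_upper[OF UNIV_I bdd])
    then show ?thesis using False by (simp add: divide_le_eq)
  qed (use B[of 0] in simp)
qed

lemma norm_sum_cinner_scaleC_le:
  "norm (\<Sum>j\<in>J. cinner (f j) x *\<^sub>C (g j::'a::complex_inner)) \<le> (\<Sum>j\<in>J. norm (f j) * norm (g j)) * norm x"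
proof -
  have "norm (\<Sum>j\<in>J. cinner (f j) x *\<^sub>C g j) \<le> (\<Sum>j\<in>J. cmod (cinner (f j) x) * norm (g j))"
    using norm_sum[of "\<lambda>j. cinner (f j) x *\<^sub>C g j" J] by simp
  also have "\<dots> \<le> (\<Sum>j\<in>J. norm (f j) * norm x * norm (g j))"
    by (intro sum_mono mult_right_mono Cauchy_Schwarz_cinner) auto
  finally show ?thesis by (simp add: sum_distrib_left sum_distrib_right mult_ac)
qed

section \<open>Distance to the spectrum of a symmetric operator\<close>

lemma spec_dist_le: "\<mu> \<in> S \<Longrightarrow> spec_dist z S \<le> cmod (z - \<mu>)"
  unfolding spec_dist_def by (auto intro!: cInf_lower bdd_belowI[of _ 0])

lemma clinear_on_shift: "clinear_on D T \<Longrightarrow> clinear_on D (\<lambda>z. T z - lam *\<^sub>C z)"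
  by (simp add: clinear_on_def scaleC_add_right scaleC_diff_right algebra_simps)

lemma symmetric_on_shift:
  assumes "symmetric_on D T" "Im lam = 0"
  shows "symmetric_on D (\<lambda>z. T z - lam *\<^sub>C z)"
proof -
  have "cnj lam = lam" using assms(2) by (simp add: complex_eq_iff)
  then show ?thesis
    using assms(1) by (simp add: symmetric_on_def cinner_diff_left cinner_diff_right
        cinner_scaleC_left cinner_scaleC_right)
qed

lemma clinear_on_right_inverse:
  assumes Dom: "csubspace Dom" and lin: "clinear_on Dom L"
    and right: "\<And>y. y \<in> V \<Longrightarrow> S y \<in> Dom \<and> L (S y) = y" and left: "\<And>z. z \<in> Dom \<Longrightarrow> S (L z) = z"
  shows "clinear_on V S"
  unfolding clinear_on_def
proof (intro ballI allI)
  fix y y' a b assume "y \<in> V" "y' \<in> V"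
  then have "L (a *\<^sub>C S y + b *\<^sub>C S y') = a *\<^sub>C y + b *\<^sub>C y'" and "a *\<^sub>C S y + b *\<^sub>C S y' \<in> Dom"
    using right clinear_onD[OF lin] Dom by (auto intro!: csubspace_add csubspace_scaleC)
  then show "S (a *\<^sub>C y + b *\<^sub>C y') = a *\<^sub>C S y + b *\<^sub>C S y'" using left by metis
qed

lemma symmetric_on_right_inverse:
  assumes sym: "symmetric_on Dom L" and right: "\<And>y. y \<in> V \<Longrightarrow> S y \<in> Dom \<and> L (S y) = y"
  shows "symmetric_on V S"
  unfolding symmetric_on_def
proof (intro ballI)
  fix y y' assume y: "y \<in> V" and y': "y' \<in> V"
  have "cinner y (S y') = cinner (L (S y)) (S y')" using right[OF y] by simp
  also have "\<dots> = cinner (S y) (L (S y'))" using right y y' by (intro symmetric_onD[OF sym]) auto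
  also have "\<dots> = cinner (S y) y'" using right[OF y'] by simp
  finally show "cinner (S y) y' = cinner y (S y')" by simp
qed

lemma symmetric_resolvent:
  assumes DV: "Dom \<subseteq> V" and TV: "\<And>x. x \<in> Dom \<Longrightarrow> T x \<in> V"
    and V: "csubspace V" and Dom: "csubspace Dom"
    and lin: "clinear_on Dom T" and sym: "symmetric_on Dom T" and real: "Im lam = 0"
    and res: "lam \<notin> op_spectrum V Dom T"
  obtains S C where "\<And>y. y \<in> V \<Longrightarrow> S y \<in> Dom \<and> T (S y) - lam *\<^sub>C S y = y"
    and "\<And>z. z \<in> Dom \<Longrightarrow> S (T z - lam *\<^sub>C z) = z"
    and "clinear_on V S" and "symmetric_on V S"
    and "\<And>y. y \<in> V \<Longrightarrow> norm (S y) \<le> C * norm y"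
proof -
  define L where "L z = T z - lam *\<^sub>C z" for z
  from res have uniq: "\<forall>y\<in>V. \<exists>!z. z \<in> Dom \<and> L z = y"
    and "\<exists>C. \<forall>z\<in>Dom. norm z \<le> C * norm (L z)"
    unfolding op_spectrum_def L_def by auto
  then obtain C where C: "\<And>z. z \<in> Dom \<Longrightarrow> norm z \<le> C * norm (L z)" by blast
  have LV: "L z \<in> V" if "z \<in> Dom" for z
    using that DV TV V by (auto simp: L_def intro!: csubspace_diff csubspace_scaleC)
  define S where "S y = (THE z. z \<in> Dom \<and> L z = y)" for y
  have S_right: "S y \<in> Dom \<and> L (S y) = y" if "y \<in> V" for y
    using theI'[OF uniq[rule_format, OF that]] unfolding S_def .
  have S_left: "S (L z) = z" if "z \<in> Dom" for z
    unfolding S_def by (rule the1_equality) (use uniq LV that in auto)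
  have "clinear_on Dom L" unfolding L_def[abs_def] by (rule clinear_on_shift[OF lin])
  then have "clinear_on V S" by (rule clinear_on_right_inverse[OF Dom _ S_right S_left])
  moreover have "symmetric_on Dom L" unfolding L_def[abs_def] by (rule symmetric_on_shift[OF sym real])
  then have "symmetric_on V S" by (rule symmetric_on_right_inverse[OF _ S_right])
  moreover have "norm (S y) \<le> C * norm y" if "y \<in> V" for y
    using C[of "S y"] S_right[OF that] by simp
  ultimately show ?thesis using that[of S C] S_right S_left by (simp add: L_def)
qed

lemma norm_le_of_unit_bound:
  fixes S :: "'a::complex_inner \<Rightarrow> 'b::complex_inner"
  assumes V: "csubspace V" and hom: "\<And>a y. y \<in> V \<Longrightarrow> S (a *\<^sub>C y) = a *\<^sub>C S y"
    and unit: "\<And>y. y \<in> V \<Longrightarrow> norm y = 1 \<Longrightarrow> norm (S y) \<le> m" and y: "y \<in> V"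
  shows "norm (S y) \<le> m * norm y"
proof (cases "y = 0")
  case True
  then show ?thesis using hom[of 0 0] csubspace_0[OF V] by simp
next
  case False
  have "norm (S (complex_of_real (1 / norm y) *\<^sub>C y)) \<le> m"
    using False y V by (intro unit) (auto simp: norm_divide csubspace_scaleC)
  then show ?thesis using False y by (simp add: hom norm_divide field_simps)
qed

lemma exists_least_norm_bound:
  fixes S :: "'a::complex_inner \<Rightarrow> 'b::complex_inner"
  assumes V: "csubspace V" and hom: "\<And>a y. y \<in> V \<Longrightarrow> S (a *\<^sub>C y) = a *\<^sub>C S y"
    and bound: "\<And>y. y \<in> V \<Longrightarrow> norm (S y) \<le> C * norm y" and x: "x \<in> V" "x \<noteq> 0"
  shows "\<exists>m\<ge>0. (\<forall>y\<in>V. norm (S y) \<le> m * norm y) \<and>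
                (\<forall>\<eta>>0. \<exists>y\<in>V. norm y = 1 \<and> m\<^sup>2 - \<eta> < (norm (S y))\<^sup>2)"
proof -
  define U where "U = {y \<in> V. norm y = 1}"
  define M2 where "M2 = (SUP y\<in>U. (norm (S y))\<^sup>2)"
  have x1: "complex_of_real (1 / norm x) *\<^sub>C x \<in> U"
    using x V by (auto simp: U_def norm_divide csubspace_scaleC)
  have bdd: "bdd_above ((\<lambda>y. (norm (S y))\<^sup>2) ` U)"
  proof (rule bdd_aboveI[of _ "C\<^sup>2"])
    fix t assume "t \<in> (\<lambda>y. (norm (S y))\<^sup>2) ` U"
    then obtain y where y: "y \<in> U" "t = (norm (S y))\<^sup>2" by auto
    then have "norm (S y) \<le> C" using bound[of y] by (simp add: U_def)
    then show "t \<le> C\<^sup>2" using y by (simp add: power_mono)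
  qed
  have unit_le: "(norm (S y))\<^sup>2 \<le> M2" if "y \<in> U" for y
    unfolding M2_def by (rule cSUP_upper[OF that bdd])
  have M2_nonneg: "0 \<le> M2" using unit_le[OF x1] by (metis order_trans zero_le_power2)
  show ?thesis
  proof (intro exI[of _ "sqrt M2"] conjI ballI allI impI)
    show "0 \<le> sqrt M2" using M2_nonneg by simp
  next
    fix y assume "y \<in> V"
    show "norm (S y) \<le> sqrt M2 * norm y"
      by (intro norm_le_of_unit_bound[OF V hom _ \<open>y \<in> V\<close>] real_le_rsqrt unit_le) (auto simp: U_def)
  next
    fix \<eta> :: real assume "0 < \<eta>"
    then have "M2 - \<eta> < (SUP y\<in>U. (norm (S y))\<^sup>2)" by (simp add: M2_def)
    then obtain y where "y \<in> U" "M2 - \<eta> < (norm (S y))\<^sup>2"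
      using less_cSup_iff[OF _ bdd] x1 by auto
    then show "\<exists>y\<in>V. norm y = 1 \<and> (sqrt M2)\<^sup>2 - \<eta> < (norm (S y))\<^sup>2"
      using M2_nonneg by (auto simp: U_def)
  qed
qed

lemma symmetric_norm_square_estimate:
  assumes sym: "symmetric_on V S" and SV: "\<And>y. y \<in> V \<Longrightarrow> S y \<in> V"
    and bound: "\<And>y. y \<in> V \<Longrightarrow> norm (S y) \<le> m * norm y" and y: "y \<in> V" "norm y = 1"
  shows "(norm (S (S y) - complex_of_real (m\<^sup>2) *\<^sub>C y))\<^sup>2 \<le> m\<^sup>2 * (m\<^sup>2 - (norm (S y))\<^sup>2)"
proof -
  have "(norm (S (S y)))\<^sup>2 \<le> (m * norm (S y))\<^sup>2"
    using bound[OF SV[OF y(1)]] by (intro power_mono) auto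
  moreover have "(norm (complex_of_real (m\<^sup>2) *\<^sub>C y))\<^sup>2 = m\<^sup>2 * m\<^sup>2"
    using y(2) by (simp add: power2_eq_square norm_mult)
  moreover have "cinner (S (S y)) y = complex_of_real ((norm (S y))\<^sup>2)"
    using symmetric_onD[OF sym SV[OF y(1)] y(1)] by (simp add: cinner_self)
  then have "Re (cinner (S (S y)) (complex_of_real (m\<^sup>2) *\<^sub>C y)) = m\<^sup>2 * (norm (S y))\<^sup>2"
    by (simp add: cinner_scaleC_right del: of_real_power flip: of_real_mult)
  ultimately show ?thesis
    unfolding norm_diff_sq by (simp add: power_mult_distrib algebra_simps)
qed

text \<open>On an almost maximizing unit vector y, \<open>(S - m)(S + m) y = S\<^sup>2 y - m\<^sup>2 y\<close> is small;
  so either \<open>(S + m) y\<close> is small, or its normalization is an approximate eigenvector for m.\<close>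

lemma symmetric_approx_eigenvector_pm_norm:
  assumes V: "csubspace V" and SV: "\<And>y. y \<in> V \<Longrightarrow> S y \<in> V"
    and lin: "clinear_on V S" and sym: "symmetric_on V S"
    and bound: "\<And>y. y \<in> V \<Longrightarrow> norm (S y) \<le> m * norm y" and m: "0 < m"
    and sup: "\<And>\<eta>. 0 < \<eta> \<Longrightarrow> \<exists>y\<in>V. norm y = 1 \<and> m\<^sup>2 - \<eta> < (norm (S y))\<^sup>2"
    and \<delta>: "0 < \<delta>"
  shows "\<exists>\<sigma>\<in>{m, - m}. \<exists>y\<in>V. norm y = 1 \<and> norm (S y - complex_of_real \<sigma> *\<^sub>C y) \<le> \<delta>"
proof -
  obtain y where y: "y \<in> V" "norm y = 1" and y_max: "m\<^sup>2 - \<delta>^4 / m\<^sup>2 < (norm (S y))\<^sup>2"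
    using sup[of "\<delta>^4 / m\<^sup>2"] \<delta> m by auto
  have "m\<^sup>2 * (m\<^sup>2 - (norm (S y))\<^sup>2) < m\<^sup>2 * (\<delta>^4 / m\<^sup>2)"
    using y_max m by (intro mult_strict_left_mono) auto
  then have "(norm (S (S y) - complex_of_real (m\<^sup>2) *\<^sub>C y))\<^sup>2 < (\<delta>\<^sup>2)\<^sup>2"
    using symmetric_norm_square_estimate[OF sym SV bound y] m by simp
  then have small: "norm (S (S y) - complex_of_real (m\<^sup>2) *\<^sub>C y) < \<delta>\<^sup>2"
    by (rule power_less_imp_less_base) (use \<delta> in auto)
  define w where "w = S y + complex_of_real m *\<^sub>C y"
  have wV: "w \<in> V" using y SV V by (auto simp: w_def intro!: csubspace_add csubspace_scaleC)
  have Sw: "S w - complex_of_real m *\<^sub>C w = S (S y) - complex_of_real (m\<^sup>2) *\<^sub>C y"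
    using y SV by (simp add: w_def clinear_on_add[OF lin] clinear_on_scaleC[OF lin] csubspace_scaleC[OF V]
        scaleC_add_right power2_eq_square)
  show ?thesis
  proof (cases "norm w \<le> \<delta>")
    case True
    then show ?thesis using y by (intro bexI[of _ "- m"]) (auto simp: w_def scaleC_minus_left)
  next
    case False
    define w1 where "w1 = complex_of_real (1 / norm w) *\<^sub>C w"
    have w1: "w1 \<in> V" "norm w1 = 1" using False \<delta> wV V by (auto simp: w1_def norm_divide csubspace_scaleC)
    have "S w1 - complex_of_real m *\<^sub>C w1 = complex_of_real (1 / norm w) *\<^sub>C (S w - complex_of_real m *\<^sub>C w)"
      using wV by (simp add: w1_def clinear_on_scaleC[OF lin] scaleC_diff_right mult.commute)
    then have "norm (S w1 - complex_of_real m *\<^sub>C w1) = norm (S (S y) - complex_of_real (m\<^sup>2) *\<^sub>C y) / norm w"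
      unfolding Sw by (simp add: norm_divide)
    also have "\<dots> < \<delta>\<^sup>2 / \<delta>" using small False \<delta> by (intro frac_less) auto
    finally have "norm (S w1 - complex_of_real m *\<^sub>C w1) \<le> \<delta>" by (simp add: power2_eq_square)
    then show ?thesis using w1 by (intro bexI[of _ m]) auto
  qed
qed

lemma symmetric_approx_eigenvalue_at_norm:
  assumes V: "csubspace V" and SV: "\<And>y. y \<in> V \<Longrightarrow> S y \<in> V"
    and lin: "clinear_on V S" and sym: "symmetric_on V S"
    and bound: "\<And>y. y \<in> V \<Longrightarrow> norm (S y) \<le> m * norm y" and m: "0 < m"
    and sup: "\<And>\<eta>. 0 < \<eta> \<Longrightarrow> \<exists>y\<in>V. norm y = 1 \<and> m\<^sup>2 - \<eta> < (norm (S y))\<^sup>2"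
  shows "\<exists>\<sigma>\<in>{m, - m}. \<forall>\<delta>>0. \<exists>y\<in>V. norm y = 1 \<and> norm (S y - complex_of_real \<sigma> *\<^sub>C y) \<le> \<delta>"
proof (rule ccontr)
  assume "\<not> ?thesis"
  then obtain \<delta>1 \<delta>2 where "0 < \<delta>1" "\<forall>y\<in>V. norm y = 1 \<longrightarrow> \<delta>1 < norm (S y - complex_of_real m *\<^sub>C y)"
    and "0 < \<delta>2" "\<forall>y\<in>V. norm y = 1 \<longrightarrow> \<delta>2 < norm (S y - complex_of_real (- m) *\<^sub>C y)"
    by (auto simp: not_le)
  then show False
    using symmetric_approx_eigenvector_pm_norm[OF V SV lin sym bound m sup, of "min \<delta>1 \<delta>2"] by force
qed

text \<open>For \<open>z = S y\<close> one has \<open>T z - (lam + 1/\<mu>) z = - (S y - \<mu> y) / \<mu>\<close>, so approximate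
  eigenvectors of the resolvent S are approximate eigenvectors of T.\<close>

lemma resolvent_approx_eigenvalue_in_spectrum:
  assumes S: "\<And>y. y \<in> V \<Longrightarrow> S y \<in> Dom \<and> T (S y) - lam *\<^sub>C S y = y" and \<mu>: "\<mu> \<noteq> 0"
    and approx: "\<And>\<delta>. 0 < \<delta> \<Longrightarrow> \<exists>y\<in>V. norm y = 1 \<and> norm (S y - \<mu> *\<^sub>C y) \<le> \<delta>"
  shows "lam + 1 / \<mu> \<in> op_spectrum V Dom T"
proof -
  let ?\<nu> = "lam + 1 / \<mu>"
  have "\<not> (\<exists>C. \<forall>z\<in>Dom. norm z \<le> C * norm (T z - ?\<nu> *\<^sub>C z))"
  proof
    assume "\<exists>C. \<forall>z\<in>Dom. norm z \<le> C * norm (T z - ?\<nu> *\<^sub>C z)"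
    then obtain C where C: "\<And>z. z \<in> Dom \<Longrightarrow> norm z \<le> C * norm (T z - ?\<nu> *\<^sub>C z)" by blast
    define \<delta> where "\<delta> = min (cmod \<mu> / 2) ((cmod \<mu>)\<^sup>2 / (2 * (\<bar>C\<bar> + 1)))"
    have "0 < \<delta>" using \<mu> by (simp add: \<delta>_def)
    then obtain y where y: "y \<in> V" "norm y = 1" and close: "norm (S y - \<mu> *\<^sub>C y) \<le> \<delta>"
      using approx by blast
    have "T (S y) - ?\<nu> *\<^sub>C S y = (T (S y) - lam *\<^sub>C S y) - (1 / \<mu>) *\<^sub>C S y"
      by (simp add: scaleC_add_left diff_diff_eq)
    also have "\<dots> = - ((1 / \<mu>) *\<^sub>C (S y - \<mu> *\<^sub>C y))"
      using S[OF y(1)] \<mu> by (simp add: scaleC_diff_right)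
    finally have "norm (T (S y) - ?\<nu> *\<^sub>C S y) = norm (S y - \<mu> *\<^sub>C y) / cmod \<mu>"
      by (simp add: norm_divide)
    also have "\<dots> \<le> \<delta> / cmod \<mu>" using close by (simp add: divide_right_mono)
    finally have small: "norm (T (S y) - ?\<nu> *\<^sub>C S y) \<le> \<delta> / cmod \<mu>" .
    have "cmod \<mu> - \<delta> \<le> norm (S y)"
      using close y(2) norm_triangle_ineq2[of "\<mu> *\<^sub>C y" "S y"] by (simp add: norm_minus_commute)
    then have "cmod \<mu> / 2 \<le> norm (S y)" by (simp add: \<delta>_def)
    also have "\<dots> \<le> C * norm (T (S y) - ?\<nu> *\<^sub>C S y)" using C S[OF y(1)] by blast
    also have "\<dots> \<le> \<bar>C\<bar> * norm (T (S y) - ?\<nu> *\<^sub>C S y)" by (intro mult_right_mono) auto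
    also have "\<dots> \<le> \<bar>C\<bar> * (\<delta> / cmod \<mu>)" using small by (intro mult_left_mono) auto
    also have "\<dots> \<le> \<bar>C\<bar> * (cmod \<mu> / (2 * (\<bar>C\<bar> + 1)))"
    proof (intro mult_left_mono)
      have "\<delta> \<le> (cmod \<mu>)\<^sup>2 / (2 * (\<bar>C\<bar> + 1))" by (simp add: \<delta>_def)
      then show "\<delta> / cmod \<mu> \<le> cmod \<mu> / (2 * (\<bar>C\<bar> + 1))"
        using \<mu> by (simp add: divide_le_eq power2_eq_square)
    qed simp
    also have "\<dots> = (cmod \<mu> / 2) * (\<bar>C\<bar> / (\<bar>C\<bar> + 1))" by simp
    also have "\<dots> < cmod \<mu> / 2 * 1" using \<mu> by (intro mult_strict_left_mono) auto
    finally show False by simp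
  qed
  then show ?thesis unfolding op_spectrum_def by blast
qed

text \<open>If the bound failed, lam would be in the resolvent set, and the resolvent would be a bounded
  symmetric operator of norm \<open>m > 1 / spec_dist\<close>; then \<open>lam + 1/m\<close> or \<open>lam - 1/m\<close> lies in the spectrum.\<close>

lemma spec_dist_mult_norm_le:
  assumes DV: "Dom \<subseteq> V" and TV: "\<And>x. x \<in> Dom \<Longrightarrow> T x \<in> V"
    and V: "csubspace V" and Dom: "csubspace Dom"
    and lin: "clinear_on Dom T" and sym: "symmetric_on Dom T" and real: "Im lam = 0"
    and x: "x \<in> Dom"
  shows "spec_dist lam (op_spectrum V Dom T) * norm x \<le> norm (T x - lam *\<^sub>C x)"
proof (rule ccontr)
  define d where "d = spec_dist lam (op_spectrum V Dom T)"
  assume "\<not> ?thesis"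
  then have lt: "norm (T x - lam *\<^sub>C x) < d * norm x" by (simp add: d_def)
  then have "0 < d * norm x" by (metis norm_ge_zero le_less_trans)
  then have "x \<noteq> 0" "0 < d" by (auto simp: zero_less_mult_iff)
  have resolvent: "lam \<notin> op_spectrum V Dom T"
    using spec_dist_le[of lam "op_spectrum V Dom T" lam] \<open>0 < d\<close> by (auto simp: d_def)
  obtain S C where S_right: "\<And>y. y \<in> V \<Longrightarrow> S y \<in> Dom \<and> T (S y) - lam *\<^sub>C S y = y"
    and S_left: "\<And>z. z \<in> Dom \<Longrightarrow> S (T z - lam *\<^sub>C z) = z"
    and S_lin: "clinear_on V S" and S_sym: "symmetric_on V S"
    and S_bound: "\<And>y. y \<in> V \<Longrightarrow> norm (S y) \<le> C * norm y"
    using symmetric_resolvent[OF DV TV V Dom lin sym real resolvent] by blast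
  have SV: "S y \<in> V" if "y \<in> V" for y using S_right[OF that] DV by auto
  have xV: "x \<in> V" using x DV by auto
  obtain m where m: "0 \<le> m" and m_bound: "\<forall>y\<in>V. norm (S y) \<le> m * norm y"
    and m_sup: "\<forall>\<eta>>0. \<exists>y\<in>V. norm y = 1 \<and> m\<^sup>2 - \<eta> < (norm (S y))\<^sup>2"
    using exists_least_norm_bound[OF V clinear_on_scaleC[OF S_lin] S_bound xV \<open>x \<noteq> 0\<close>] by blast
  have "T x - lam *\<^sub>C x \<in> V" using x DV TV V by (auto intro!: csubspace_diff csubspace_scaleC)
  then have x_le: "norm x \<le> m * norm (T x - lam *\<^sub>C x)"
    using m_bound S_left[OF x] by force
  then have "0 < m" using m \<open>x \<noteq> 0\<close> by (cases "m = 0") auto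
  have "norm x < m * (d * norm x)" using x_le lt \<open>0 < m\<close> by (smt (verit) mult_strict_left_mono)
  then have "1 < m * d" using \<open>x \<noteq> 0\<close> by (simp add: mult.assoc)
  obtain \<sigma> where \<sigma>: "\<sigma> \<in> {m, - m}"
    and approx: "\<forall>\<delta>>0. \<exists>y\<in>V. norm y = 1 \<and> norm (S y - complex_of_real \<sigma> *\<^sub>C y) \<le> \<delta>"
    using symmetric_approx_eigenvalue_at_norm[OF V SV S_lin S_sym m_bound[rule_format] \<open>0 < m\<close>
        m_sup[rule_format]] by blast
  have "lam + 1 / complex_of_real \<sigma> \<in> op_spectrum V Dom T"
    using \<sigma> \<open>0 < m\<close> approx by (intro resolvent_approx_eigenvalue_in_spectrum[OF S_right]) auto
  then have "d \<le> cmod (lam - (lam + 1 / complex_of_real \<sigma>))" unfolding d_def by (rule spec_dist_le)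
  also have "\<dots> = 1 / m" using \<sigma> \<open>0 < m\<close> by (auto simp: norm_divide)
  finally show False using \<open>1 < m * d\<close> \<open>0 < m\<close> by (simp add: field_simps)
qed

section \<open>Ritz vectors\<close>

lemma unitary_columns_imp_rows:
  fixes \<Omega> :: "nat \<Rightarrow> nat \<Rightarrow> complex"
  assumes cols: "\<forall>i\<in>{1..k}. \<forall>j\<in>{1..k}. (\<Sum>l=1..k. cnj (\<Omega> l i) * \<Omega> l j) = (if i = j then 1 else 0)"
    and a: "a \<in> {1..k}" and b: "b \<in> {1..k}"
  shows "(\<Sum>j=1..k. \<Omega> a j * cnj (\<Omega> b j)) = (if a = b then 1 else 0)"
proof -
  define M where "M = mat k k (\<lambda>(i, j). \<Omega> (Suc i) (Suc j))"
  define Mh where "Mh = mat k k (\<lambda>(i, j). cnj (\<Omega> (Suc j) (Suc i)))"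
  have shift: "(\<Sum>l=1..k. g l) = (\<Sum>l<k. g (Suc l))" for g :: "nat \<Rightarrow> complex"
    using sum.atLeast1_atMost_eq[of g k] by simp
  have carrier: "M \<in> carrier_mat k k" "Mh \<in> carrier_mat k k" unfolding M_def Mh_def by auto
  have "Mh * M = 1\<^sub>m k"
  proof (rule eq_matI)
    fix i j assume ij: "i < dim_row (1\<^sub>m k)" "j < dim_col (1\<^sub>m k)"
    then have "(Mh * M) $$ (i, j) = (\<Sum>l=1..k. cnj (\<Omega> l (Suc i)) * \<Omega> l (Suc j))"
      unfolding M_def Mh_def shift by (auto simp: scalar_prod_def times_mat_def atLeast0LessThan)
    then show "(Mh * M) $$ (i, j) = 1\<^sub>m k $$ (i, j)" using cols ij by auto
  qed (auto simp: M_def Mh_def)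
  then have rows: "M * Mh = 1\<^sub>m k" using mat_mult_left_right_inverse[OF carrier(2,1)] by blast
  obtain a' b' where ab: "a = Suc a'" "b = Suc b'" "a' < k" "b' < k"
    using a b by (intro that[of "a - 1" "b - 1"]) auto
  have "(M * Mh) $$ (a', b') = (\<Sum>j=1..k. \<Omega> a j * cnj (\<Omega> b j))"
    unfolding M_def Mh_def shift using ab by (auto simp: scalar_prod_def times_mat_def atLeast0LessThan)
  then show ?thesis using rows ab by auto
qed

text \<open>In the notation of the theorem, \<open>ritz\<close> is \<open>uh\<close>, \<open>P1\<close>, \<open>P2\<close>, \<open>P3\<close> project onto
  \<open>span {uh 1}\<close>, \<open>Q2\<close> and \<open>Q3 = Q\<^sup>\<perp>\<close>, \<open>resid j = A (uh j) - lh j uh j\<close> is the residual of the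
  j-th Ritz pair, and \<open>norm_R\<close>, \<open>norm_R1\<close>, \<open>norm_R2\<close>, \<open>norm_r\<close> are \<open>nR\<close>, \<open>nR1\<close>, \<open>nR2\<close>, \<open>nr\<close>.\<close>

locale ritz_setting =
  fixes D :: "'a::complex_inner set" and A :: "'a \<Rightarrow> 'a" and k :: nat and q :: "nat \<Rightarrow> 'a"
    and \<Omega> :: "nat \<Rightarrow> nat \<Rightarrow> complex" and lh :: "nat \<Rightarrow> real"
  assumes sa: "self_adjoint_op D A"
    and k2: "k \<ge> 2"
    and qD: "\<forall>i\<in>{1..k}. q i \<in> D"
    and q_orthonormal: "\<forall>i\<in>{1..k}. \<forall>j\<in>{1..k}. cinner (q i) (q j) = (if i = j then 1 else 0)"
    and \<Omega>_unitary: "\<forall>i\<in>{1..k}. \<forall>j\<in>{1..k}.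
                     (\<Sum>l=1..k. cnj (\<Omega> l i) * \<Omega> l j) = (if i = j then 1 else 0)"
    and eigdecomp: "\<forall>i\<in>{1..k}. \<forall>j\<in>{1..k}.
                     cinner (q i) (A (q j)) = (\<Sum>l=1..k. \<Omega> i l * complex_of_real (lh l) * cnj (\<Omega> j l))"
begin

definition ritz :: "nat \<Rightarrow> 'a" where "ritz j = (\<Sum>i=1..k. \<Omega> i j *\<^sub>C q i)"
definition Q2 :: "'a set" where "Q2 = cspan (ritz ` {2..k})"
definition Q3 :: "'a set" where "Q3 = orth_compl (cspan (q ` {1..k}))"
definition P1 :: "'a \<Rightarrow> 'a" where "P1 = orth_proj (cspan {ritz 1})"
definition P2 :: "'a \<Rightarrow> 'a" where "P2 = orth_proj Q2"
definition P3 :: "'a \<Rightarrow> 'a" where "P3 = orth_proj Q3"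
definition resid :: "nat \<Rightarrow> 'a" where "resid j = P3 (A (ritz j))"
definition norm_R :: real where "norm_R = onorm (\<lambda>x. P3 (A (P1 x)) + P3 (A (P2 x)))"
definition norm_R1 :: real where "norm_R1 = onorm (\<lambda>x. P3 (A (P1 x)))"
definition norm_R2 :: real where "norm_R2 = onorm (\<lambda>x. P3 (A (P2 x)))"
definition norm_r :: "nat \<Rightarrow> real" where "norm_r i = onorm (\<lambda>x. P3 (A (P2 (orth_proj (cspan {ritz i}) x))))"

lemma D_csubspace: "csubspace D"
  and A_clinear_on: "clinear_on D A"
  and A_symmetric_on: "symmetric_on D A"
  using sa by (simp_all add: self_adjoint_op_csubspace self_adjoint_op_clinear_on self_adjoint_op_symmetric_on)

lemma q_orthonormal_on: "orthonormal_on {1..k} q"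
  using q_orthonormal by (simp add: orthonormal_on_def)

lemma A_sum:
  "finite J \<Longrightarrow> (\<And>j. j \<in> J \<Longrightarrow> y j \<in> D) \<Longrightarrow> A (\<Sum>j\<in>J. c j *\<^sub>C y j) = (\<Sum>j\<in>J. c j *\<^sub>C A (y j))"
  by (rule clinear_on_sum[OF A_clinear_on D_csubspace])

lemma ritz_in_D: "ritz j \<in> D"
  unfolding ritz_def using qD D_csubspace by (auto intro!: csubspace_sum csubspace_scaleC)

lemma ritz_in_cspan_q: "ritz j \<in> cspan (q ` {1..k})"
  unfolding ritz_def by (rule sum_scaleC_in_cspan) simp

lemma cinner_q_ritz: "a \<in> {1..k} \<Longrightarrow> cinner (q a) (ritz j) = \<Omega> a j"
  unfolding ritz_def by (rule cinner_orthonormal_sum[OF q_orthonormal_on]) simp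

lemma ritz_orthonormal_on: "orthonormal_on {1..k} ritz"
  unfolding orthonormal_on_def
proof (intro ballI)
  fix i j assume i: "i \<in> {1..k}" and j: "j \<in> {1..k}"
  have "cinner (ritz i) (ritz j) = (\<Sum>a=1..k. cnj (\<Omega> a i) * cinner (q a) (ritz j))"
    by (simp add: ritz_def[of i] cinner_sum_left cinner_scaleC_left)
  also have "\<dots> = (\<Sum>a=1..k. cnj (\<Omega> a i) * \<Omega> a j)"
    using cinner_q_ritz by (intro sum.cong refl) auto
  finally show "cinner (ritz i) (ritz j) = (if i = j then 1 else 0)" using \<Omega>_unitary i j by simp
qed

lemma norm_ritz: "j \<in> {1..k} \<Longrightarrow> norm (ritz j) = 1"
  by (rule orthonormal_on_norm[OF ritz_orthonormal_on])

lemma ritz_rayleigh: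
  assumes i: "i \<in> {1..k}" and j: "j \<in> {1..k}"
  shows "cinner (ritz i) (A (ritz j)) = (if i = j then complex_of_real (lh i) else 0)"
proof -
  have ritz_Aq: "cinner (ritz i) (A (q b)) = complex_of_real (lh i) * cnj (\<Omega> b i)" if b: "b \<in> {1..k}" for b
  proof -
    have "cinner (ritz i) (A (q b))
          = (\<Sum>a=1..k. \<Sum>l=1..k. cnj (\<Omega> a i) * \<Omega> a l * (complex_of_real (lh l) * cnj (\<Omega> b l)))"
      unfolding ritz_def using eigdecomp b
      by (auto simp: cinner_sum_left cinner_scaleC_left sum_distrib_left mult_ac intro!: sum.cong)
    also have "\<dots> = (\<Sum>l=1..k. (\<Sum>a=1..k. cnj (\<Omega> a i) * \<Omega> a l) * (complex_of_real (lh l) * cnj (\<Omega> b l)))"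
      by (subst sum.swap) (simp add: sum_distrib_right)
    also have "\<dots> = (\<Sum>l=1..k. if l = i then complex_of_real (lh l) * cnj (\<Omega> b l) else 0)"
      using \<Omega>_unitary i by (intro sum.cong refl) auto
    finally show ?thesis using i by simp
  qed
  have "A (ritz j) = (\<Sum>b=1..k. \<Omega> b j *\<^sub>C A (q b))"
    unfolding ritz_def using qD by (intro A_sum) auto
  then have "cinner (ritz i) (A (ritz j)) = (\<Sum>b=1..k. \<Omega> b j * cinner (ritz i) (A (q b)))"
    by (simp add: cinner_sum_right cinner_scaleC_right)
  also have "\<dots> = complex_of_real (lh i) * (\<Sum>b=1..k. cnj (\<Omega> b i) * \<Omega> b j)"
    by (simp add: ritz_Aq sum_distrib_left mult_ac)
  finally show ?thesis using \<Omega>_unitary i j by simp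
qed

text \<open>The Ritz vectors are an orthonormal basis of \<open>Q = span q\<close>, so both families give the same
  projection onto Q; this uses that \<open>\<Omega>\<close> also has orthonormal rows.\<close>

lemma proj_q_eq_proj_ritz:
  "(\<Sum>a=1..k. cinner (q a) x *\<^sub>C q a) = (\<Sum>j=1..k. cinner (ritz j) x *\<^sub>C ritz j)"
proof -
  have rows: "(\<Sum>j=1..k. \<Omega> b j * cnj (\<Omega> a j)) = (if b = a then 1 else 0)"
    if "a \<in> {1..k}" "b \<in> {1..k}" for a b
    using unitary_columns_imp_rows[OF \<Omega>_unitary that(2,1)] .
  have coeff: "(\<Sum>j=1..k. cinner (ritz j) x * \<Omega> b j) = cinner (q b) x" if b: "b \<in> {1..k}" for b
  proof -
    have "(\<Sum>j=1..k. cinner (ritz j) x * \<Omega> b j)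
          = (\<Sum>a=1..k. (\<Sum>j=1..k. \<Omega> b j * cnj (\<Omega> a j)) * cinner (q a) x)"
      unfolding ritz_def
      by (simp add: cinner_sum_left cinner_scaleC_left sum_distrib_left sum_distrib_right mult_ac)
        (rule sum.swap)
    also have "\<dots> = (\<Sum>a=1..k. if b = a then cinner (q a) x else 0)"
      using rows b by (intro sum.cong refl) auto
    finally show ?thesis using b by simp
  qed
  have "(\<Sum>j=1..k. cinner (ritz j) x *\<^sub>C ritz j) = (\<Sum>b=1..k. (\<Sum>j=1..k. cinner (ritz j) x * \<Omega> b j) *\<^sub>C q b)"
    unfolding ritz_def[of j for j] by (simp add: scaleC_sum_right scaleC_sum_left) (rule sum.swap)
  also have "\<dots> = (\<Sum>b=1..k. cinner (q b) x *\<^sub>C q b)" using coeff by (intro sum.cong refl) auto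
  finally show ?thesis by simp
qed

lemma has_orth_proj_Q2: "has_orth_proj Q2"
  and P2_eq: "P2 x = (\<Sum>j=2..k. cinner (ritz j) x *\<^sub>C ritz j)"
  using orthonormal_on_subset[OF ritz_orthonormal_on, of "{2..k}"]
  by (auto simp: Q2_def P2_def has_orth_proj_cspan_orthonormal orth_proj_cspan_orthonormal)

lemma has_orth_proj_Q3: "has_orth_proj Q3"
  unfolding Q3_def by (rule has_orth_proj_orth_compl_cspan_orthonormal[OF q_orthonormal_on]) simp

lemma P3_eq: "P3 x = x - (\<Sum>j=1..k. cinner (ritz j) x *\<^sub>C ritz j)"
  using orth_proj_orth_compl_cspan_orthonormal[OF q_orthonormal_on, of x]
  unfolding P3_def Q3_def proj_q_eq_proj_ritz by simp

lemma proj_ritz: "i \<in> {1..k} \<Longrightarrow> orth_proj (cspan {ritz i}) x = cinner (ritz i) x *\<^sub>C ritz i"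
  using orth_proj_cspan_orthonormal[OF orthonormal_on_subset[OF ritz_orthonormal_on, of "{i}"]] by simp

lemma P1_eq: "P1 x = cinner (ritz 1) x *\<^sub>C ritz 1"
  using proj_ritz[of 1] k2 by (simp add: P1_def)

lemma ritz_in_Q2: "j \<in> {2..k} \<Longrightarrow> ritz j \<in> Q2"
  unfolding Q2_def by (intro generator_in_cspan) simp

lemma Q2_subset_D:
  assumes "y \<in> Q2"
  shows "y \<in> D"
proof -
  have "y = (\<Sum>j=2..k. cinner (ritz j) y *\<^sub>C ritz j)"
    using cspan_orthonormal_repr[OF orthonormal_on_subset[OF ritz_orthonormal_on, of "{2..k}"], of y] assms
    by (simp add: Q2_def)
  also have "\<dots> \<in> D" using ritz_in_D D_csubspace by (auto intro!: csubspace_sum csubspace_scaleC)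
  finally show ?thesis .
qed

lemma ritz_orthogonal_Q3: "y \<in> Q3 \<Longrightarrow> cinner (ritz j) y = 0"
  using ritz_in_cspan_q by (simp add: Q3_def orth_compl_def)

lemma
  shows P2_clinear_on: "clinear_on UNIV P2"
    and P3_clinear_on: "clinear_on UNIV P3"
  unfolding P2_def P3_def by (simp_all add: orth_proj_clinear_on has_orth_proj_Q2 has_orth_proj_Q3)

lemma A_ritz: "j \<in> {1..k} \<Longrightarrow> A (ritz j) = resid j + complex_of_real (lh j) *\<^sub>C ritz j"
proof -
  assume j: "j \<in> {1..k}"
  have "(\<Sum>i=1..k. cinner (ritz i) (A (ritz j)) *\<^sub>C ritz i)
        = (\<Sum>i=1..k. if i = j then complex_of_real (lh j) *\<^sub>C ritz j else 0)"
    using ritz_rayleigh j by (intro sum.cong refl) auto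
  then show ?thesis using j by (simp add: resid_def P3_eq)
qed

lemma P2_in_Q2: "P2 x \<in> Q2"
  unfolding P2_def by (rule orth_proj_in[OF has_orth_proj_Q2])

lemma P3_in_Q3: "P3 x \<in> Q3"
  unfolding P3_def by (rule orth_proj_in[OF has_orth_proj_Q3])

lemma P2_id: "y \<in> Q2 \<Longrightarrow> P2 y = y"
  unfolding P2_def by (rule orth_proj_id[OF has_orth_proj_Q2])

lemma resid_in_Q3: "resid j \<in> Q3"
  unfolding resid_def by (rule P3_in_Q3)

lemma P3_id: "y \<in> Q3 \<Longrightarrow> P3 y = y"
  unfolding P3_def by (rule orth_proj_id[OF has_orth_proj_Q3])

lemma P1_in_D: "P1 x \<in> D"
  unfolding P1_eq by (rule csubspace_scaleC[OF D_csubspace ritz_in_D])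

lemma P3_in_D: "x \<in> D \<Longrightarrow> P3 x \<in> D"
  unfolding P3_eq using ritz_in_D D_csubspace by (auto intro!: csubspace_diff csubspace_sum csubspace_scaleC)

lemma P2_A_ritz1: "P2 (A (ritz 1)) = 0"
  unfolding P2_eq using ritz_rayleigh k2 by (intro sum.neutral) auto

lemma ritz1_orthogonal_Q2: "y \<in> Q2 \<Longrightarrow> cinner (ritz 1) y = 0"
  using cinner_cspan_orthonormal_eq_0[OF orthonormal_on_subset[OF ritz_orthonormal_on, of "{2..k}"],
      of y "ritz 1"] ritz_orthonormal_on k2
  by (auto simp: Q2_def orthonormal_on_def cinner_zero_commute)

lemma R1_apply: "P3 (A (P1 x)) = cinner (ritz 1) x *\<^sub>C resid 1"
  by (simp add: P1_eq resid_def clinear_on_scaleC[OF A_clinear_on ritz_in_D]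
      clinear_on_scaleC[OF P3_clinear_on])

lemma R2_apply: "P3 (A (P2 x)) = (\<Sum>j=2..k. cinner (ritz j) x *\<^sub>C resid j)"
  unfolding P2_eq resid_def using ritz_in_D
  by (simp add: A_sum clinear_on_sum[OF P3_clinear_on csubspace_UNIV])

lemma r_apply:
  assumes i: "i \<in> {2..k}"
  shows "P3 (A (P2 (orth_proj (cspan {ritz i}) x))) = cinner (ritz i) x *\<^sub>C resid i"
proof -
  have "P2 (orth_proj (cspan {ritz i}) x) = cinner (ritz i) x *\<^sub>C ritz i"
    using i ritz_in_Q2[OF i] has_orth_proj_Q2
    by (simp add: proj_ritz P2_def orth_proj_id has_orth_proj_def csubspace_scaleC)
  then show ?thesis
    by (simp add: resid_def clinear_on_scaleC[OF A_clinear_on ritz_in_D] clinear_on_scaleC[OF P3_clinear_on])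
qed

lemma norm_cinner_ritz_scaleC_le:
  assumes "j \<in> {1..k}"
  shows "norm (cinner (ritz j) x *\<^sub>C (v::'a)) \<le> norm v * norm x"
proof -
  have "cmod (cinner (ritz j) x) \<le> norm x"
    using Cauchy_Schwarz_cinner[of "ritz j" x] norm_ritz[OF assms] by simp
  then have "cmod (cinner (ritz j) x) * norm v \<le> norm x * norm v" by (rule mult_right_mono) simp
  then show ?thesis by (simp add: mult.commute)
qed

lemma
  shows norm_R_bound: "norm (P3 (A (P1 x)) + P3 (A (P2 x))) \<le> norm_R * norm x"
    and norm_R1_bound: "norm (P3 (A (P1 x))) \<le> norm_R1 * norm x"
    and norm_R2_bound: "norm (P3 (A (P2 x))) \<le> norm_R2 * norm x"
    and norm_R_nonneg: "0 \<le> norm_R"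
    and norm_R2_nonneg: "0 \<le> norm_R2"
proof -
  have B1: "norm (P3 (A (P1 y))) \<le> norm (resid 1) * norm y" for y
    using norm_cinner_ritz_scaleC_le[of 1] k2 by (simp add: R1_apply)
  have B2: "norm (P3 (A (P2 y))) \<le> (\<Sum>j=2..k. norm (ritz j) * norm (resid j)) * norm y" for y
    unfolding R2_apply by (rule norm_sum_cinner_scaleC_le)
  have B: "norm (P3 (A (P1 y)) + P3 (A (P2 y)))
           \<le> (norm (resid 1) + (\<Sum>j=2..k. norm (ritz j) * norm (resid j))) * norm y" for y
    using norm_triangle_ineq[of "P3 (A (P1 y))" "P3 (A (P2 y))"] B1[of y] B2[of y]
    by (simp add: distrib_right)
  show "norm (P3 (A (P1 x)) + P3 (A (P2 x))) \<le> norm_R * norm x" "0 \<le> norm_R"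
    unfolding norm_R_def by (rule norm_le_onorm_of_bound onorm_nonneg_of_bound, rule B)+
  show "norm (P3 (A (P1 x))) \<le> norm_R1 * norm x"
    unfolding norm_R1_def by (rule norm_le_onorm_of_bound, rule B1)
  show "norm (P3 (A (P2 x))) \<le> norm_R2 * norm x" "0 \<le> norm_R2"
    unfolding norm_R2_def by (rule norm_le_onorm_of_bound onorm_nonneg_of_bound, rule B2)+
qed

lemma
  assumes i: "i \<in> {2..k}"
  shows norm_resid_le: "norm (resid i) \<le> norm_r i"
    and norm_r_nonneg: "0 \<le> norm_r i"
proof -
  have i1: "i \<in> {1..k}" using i by simp
  have B: "norm (P3 (A (P2 (orth_proj (cspan {ritz i}) y)))) \<le> norm (resid i) * norm y" for y
    using norm_cinner_ritz_scaleC_le[OF i1] by (simp add: r_apply[OF i])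
  have "norm (P3 (A (P2 (orth_proj (cspan {ritz i}) (ritz i))))) \<le> norm_r i * norm (ritz i)"
    unfolding norm_r_def by (rule norm_le_onorm_of_bound, rule B)
  moreover have "cinner (ritz i) (ritz i) = 1"
    using ritz_orthonormal_on i1 by (simp add: orthonormal_on_def)
  ultimately show "norm (resid i) \<le> norm_r i" using norm_ritz[OF i1] by (simp add: r_apply[OF i])
  show "0 \<le> norm_r i" unfolding norm_r_def by (rule onorm_nonneg_of_bound, rule B)
qed

text \<open>The block \<open>A\<^sub>2\<^sub>3\<close> is the adjoint of \<open>A\<^sub>3\<^sub>2\<close>, so it obeys the same bound.\<close>

lemma norm_A23_le:
  assumes y: "y \<in> D" "y \<in> Q3"
  shows "norm (P2 (A y)) \<le> norm_R2 * norm y"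
proof -
  define w where "w = P2 (A y)"
  have wQ2: "w \<in> Q2" unfolding w_def by (rule P2_in_Q2)
  have "cinner w w = cinner w (A y)"
    unfolding w_def P2_def by (rule orth_proj_cinner_right[OF has_orth_proj_Q2 P2_in_Q2[unfolded P2_def]])
  also have "\<dots> = cinner (A w) y" using symmetric_onD[OF A_symmetric_on Q2_subset_D[OF wQ2] y(1)] by simp
  also have "\<dots> = cinner (P3 (A (P2 w))) y"
    using orth_proj_cinner_left[OF has_orth_proj_Q3 y(2)] by (simp add: P2_id[OF wQ2] P3_def)
  finally have ww: "cinner w w = cinner (P3 (A (P2 w))) y" .
  have "(norm w)\<^sup>2 = cmod (cinner w w)" by (simp add: cinner_self norm_power)
  also have "\<dots> \<le> norm (P3 (A (P2 w))) * norm y" unfolding ww by (rule Cauchy_Schwarz_cinner)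
  also have "\<dots> \<le> norm_R2 * norm w * norm y" by (intro mult_right_mono norm_R2_bound) simp
  finally have "norm w * norm w \<le> norm w * (norm_R2 * norm y)" by (simp add: power2_eq_square mult_ac)
  then show ?thesis
    using norm_R2_nonneg by (cases "norm w = 0") (auto simp: w_def)
qed

end

section \<open>Angle between an eigenvector and the Ritz vector\<close>

lemma sqrt_sum_squares_le_of_bounds:
  fixes a t \<alpha> G N :: real
  assumes "0 \<le> a" "a \<le> \<alpha> * t" "0 \<le> t" "0 < G" "G * t \<le> N"
  shows "sqrt (a\<^sup>2 + t\<^sup>2) \<le> N / G * sqrt (1 + \<alpha>\<^sup>2)"
proof -
  have "a\<^sup>2 \<le> (\<alpha> * t)\<^sup>2" using assms(1,2) by (intro power_mono) auto
  then have "a\<^sup>2 + t\<^sup>2 \<le> (t * sqrt (1 + \<alpha>\<^sup>2))\<^sup>2" by (simp add: power_mult_distrib algebra_simps)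
  then have "sqrt (a\<^sup>2 + t\<^sup>2) \<le> t * sqrt (1 + \<alpha>\<^sup>2)" using assms(3) by (intro real_le_lsqrt) auto
  also have "\<dots> \<le> N / G * sqrt (1 + \<alpha>\<^sup>2)" using assms(4,5) by (intro mult_right_mono) (auto simp: field_simps)
  finally show ?thesis .
qed

locale ritz_eigenpair = ritz_setting +
  fixes u :: 'a and lam :: complex
  assumes uD: "u \<in> D" and eig: "A u = lam *\<^sub>C u" and unorm: "norm u = 1"
begin

definition gap :: real where "gap = spec_dist lam (op_spectrum Q2 Q2 (\<lambda>x. P2 (A (P2 x))))"
definition Gap :: real where "Gap = spec_dist lam (op_spectrum Q3 (D \<inter> Q3) (\<lambda>x. P3 (A (P3 x))))"

lemma lam_real: "Im lam = 0"
proof -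
  have "cinner (A u) u = cinner u (A u)" by (rule symmetric_onD[OF A_symmetric_on uD uD])
  moreover have "cinner u u = 1" using unorm by (simp add: cinner_self)
  ultimately have "cnj lam = lam" by (simp add: eig cinner_scaleC_left cinner_scaleC_right)
  then show ?thesis by (metis Reals_cnj_iff complex_is_Real_iff)
qed

lemma eigvec_decomp: "u = P1 u + P2 u + P3 u"
proof -
  have "{1..k} = insert 1 {2..k}" using k2 by auto
  then have "(\<Sum>j=1..k. cinner (ritz j) u *\<^sub>C ritz j)
             = cinner (ritz 1) u *\<^sub>C ritz 1 + (\<Sum>j=2..k. cinner (ritz j) u *\<^sub>C ritz j)"
    by simp
  then show ?thesis by (simp add: P1_eq P2_eq P3_eq)
qed

lemma sin_vangle_eq: "sin (vangle u (ritz 1)) = sqrt ((norm (P2 u))\<^sup>2 + (norm (P3 u))\<^sup>2)"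
proof -
  define c where "c = cinner (ritz 1) u"
  have ritz1: "1 \<in> {1..k}" using k2 by simp
  have "cinner (P1 u) (P2 u) = 0"
    using ritz1_orthogonal_Q2[OF P2_in_Q2] by (simp add: P1_eq cinner_scaleC_left)
  moreover have "cinner (P1 u + P2 u) (P3 u) = 0"
    by (simp add: P1_eq P2_eq cinner_add_left cinner_sum_left cinner_scaleC_left
        ritz_orthogonal_Q3[OF P3_in_Q3])
  ultimately have "(norm (P1 u + P2 u + P3 u))\<^sup>2 = (norm (P1 u))\<^sup>2 + (norm (P2 u))\<^sup>2 + (norm (P3 u))\<^sup>2"
    by (simp add: norm_add_sq_orthogonal)
  then have "(norm (P1 u))\<^sup>2 + (norm (P2 u))\<^sup>2 + (norm (P3 u))\<^sup>2 = 1"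
    using unorm by (simp flip: eigvec_decomp)
  moreover have "norm (P1 u) = cmod c" using norm_ritz[OF ritz1] by (simp add: P1_eq c_def)
  moreover have "cmod c \<le> 1"
    using Cauchy_Schwarz_cinner[of "ritz 1" u] norm_ritz[OF ritz1] unorm by (simp add: c_def)
  then have "sin (vangle u (ritz 1)) = sqrt (1 - (cmod c)\<^sup>2)"
    unfolding vangle_def c_def[symmetric] by (rule sin_arccos[rotated]) (use norm_ge_zero[of c] in linarith)
  ultimately show ?thesis by simp
qed

lemma Gap_estimate: "Gap * norm (P3 u) \<le> norm (P3 (A (P1 u)) + P3 (A (P2 u)))"
proof -
  have Q3: "csubspace Q3" using has_orth_proj_Q3 by (simp add: has_orth_proj_def)
  have "Gap * norm (P3 u) \<le> norm (P3 (A (P3 (P3 u))) - lam *\<^sub>C P3 u)"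
    unfolding Gap_def P3_def
  proof (rule spec_dist_mult_norm_le)
    show "clinear_on (D \<inter> Q3) (\<lambda>x. orth_proj Q3 (A (orth_proj Q3 x)))"
      by (rule compression_clinear_on[OF has_orth_proj_Q3 A_clinear_on])
    show "symmetric_on (D \<inter> Q3) (\<lambda>x. orth_proj Q3 (A (orth_proj Q3 x)))"
      by (rule compression_symmetric_on[OF has_orth_proj_Q3 A_symmetric_on])
    show "orth_proj Q3 u \<in> D \<inter> Q3" using P3_in_D[OF uD] P3_in_Q3 by (simp add: P3_def)
  qed (use Q3 D_csubspace csubspace_Int lam_real orth_proj_in[OF has_orth_proj_Q3] in auto)
  also have "P3 (A (P3 (P3 u))) - lam *\<^sub>C P3 u = - (P3 (A (P1 u)) + P3 (A (P2 u)))"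
  proof -
    have "A u = A (P1 u) + A (P2 u) + A (P3 u)"
      using P1_in_D Q2_subset_D[OF P2_in_Q2] P3_in_D[OF uD] D_csubspace
      by (subst eigvec_decomp) (simp add: clinear_on_add[OF A_clinear_on] csubspace_add)
    then have "P3 (A u) = P3 (A (P1 u)) + P3 (A (P2 u)) + P3 (A (P3 u))"
      by (simp add: clinear_on_add[OF P3_clinear_on])
    moreover have "P3 (A u) = lam *\<^sub>C P3 u" by (simp add: eig clinear_on_scaleC[OF P3_clinear_on])
    ultimately have "lam *\<^sub>C P3 u = P3 (A (P1 u)) + P3 (A (P2 u)) + P3 (A (P3 u))" by simp
    then show ?thesis by (simp add: P3_id[OF P3_in_Q3] algebra_simps)
  qed
  finally show ?thesis by (simp only: norm_minus_cancel)
qed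

lemma gap_estimate: "gap * norm (P2 u) \<le> norm_R2 * norm (P3 u)"
proof -
  have Q2: "csubspace Q2" using has_orth_proj_Q2 by (simp add: has_orth_proj_def)
  have DQ2: "D \<inter> Q2 = Q2" using Q2_subset_D by blast
  have "gap * norm (P2 u) \<le> norm (P2 (A (P2 (P2 u))) - lam *\<^sub>C P2 u)"
    unfolding gap_def P2_def
  proof (rule spec_dist_mult_norm_le)
    show "clinear_on Q2 (\<lambda>x. orth_proj Q2 (A (orth_proj Q2 x)))"
      using compression_clinear_on[OF has_orth_proj_Q2 A_clinear_on] by (simp add: DQ2)
    show "symmetric_on Q2 (\<lambda>x. orth_proj Q2 (A (orth_proj Q2 x)))"
      using compression_symmetric_on[OF has_orth_proj_Q2 A_symmetric_on] by (simp add: DQ2)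
  qed (use Q2 lam_real orth_proj_in[OF has_orth_proj_Q2] in auto)
  also have "P2 (A (P2 (P2 u))) - lam *\<^sub>C P2 u = - P2 (A (P3 u))"
  proof -
    have "A u = A (P1 u) + A (P2 u) + A (P3 u)"
      using P1_in_D Q2_subset_D[OF P2_in_Q2] P3_in_D[OF uD] D_csubspace
      by (subst eigvec_decomp) (simp add: clinear_on_add[OF A_clinear_on] csubspace_add)
    then have "P2 (A u) = P2 (A (P1 u)) + P2 (A (P2 u)) + P2 (A (P3 u))"
      by (simp add: clinear_on_add[OF P2_clinear_on])
    moreover have "P2 (A (P1 u)) = 0"
      using P2_A_ritz1
      by (simp add: P1_eq clinear_on_scaleC[OF A_clinear_on ritz_in_D] clinear_on_scaleC[OF P2_clinear_on])
    moreover have "P2 (A u) = lam *\<^sub>C P2 u" by (simp add: eig clinear_on_scaleC[OF P2_clinear_on])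
    ultimately have "lam *\<^sub>C P2 u = P2 (A (P2 u)) + P2 (A (P3 u))" by simp
    then show ?thesis by (simp add: P2_id[OF P2_in_Q2] algebra_simps)
  qed
  also have "norm (- P2 (A (P3 u))) \<le> norm_R2 * norm (P3 u)"
    using norm_A23_le[OF P3_in_D[OF uD] P3_in_Q3] by simp
  finally show ?thesis .
qed

lemma ritz_coeff_estimate:
  assumes i: "i \<in> {2..k}"
  shows "cmod (lam - complex_of_real (lh i)) * cmod (cinner (ritz i) u) \<le> norm_r i * norm (P3 u)"
proof -
  have "lam * cinner (ritz i) u = cinner (A (ritz i)) u"
    using symmetric_onD[OF A_symmetric_on ritz_in_D uD] by (simp add: eig cinner_scaleC_right)
  also have "\<dots> = cinner (resid i) (P3 u) + complex_of_real (lh i) * cinner (ritz i) u"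
    using i orth_proj_cinner_right[OF has_orth_proj_Q3 resid_in_Q3[unfolded P3_def], of i u]
    by (simp add: A_ritz cinner_add_left cinner_scaleC_left P3_def)
  finally have "(lam - complex_of_real (lh i)) * cinner (ritz i) u = cinner (resid i) (P3 u)"
    by (simp add: algebra_simps)
  then have "cmod (lam - complex_of_real (lh i)) * cmod (cinner (ritz i) u) = cmod (cinner (resid i) (P3 u))"
    by (metis norm_mult)
  also have "\<dots> \<le> norm (resid i) * norm (P3 u)" by (rule Cauchy_Schwarz_cinner)
  also have "\<dots> \<le> norm_r i * norm (P3 u)" using norm_resid_le[OF i] by (intro mult_right_mono) auto
  finally show ?thesis .
qed

lemma sin_vangle_le_R:
  assumes Gap: "0 < Gap" and gap: "0 < gap"
  shows "sin (vangle u (ritz 1)) \<le> norm_R / Gap * sqrt (1 + norm_R2\<^sup>2 / gap\<^sup>2)"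
proof -
  have P2u: "norm (P2 u) \<le> norm_R2 / gap * norm (P3 u)"
    using gap_estimate gap by (simp add: field_simps)
  have P3u: "Gap * norm (P3 u) \<le> norm_R"
    using Gap_estimate norm_R_bound[of u] unorm by simp
  show ?thesis
    using sqrt_sum_squares_le_of_bounds[OF norm_ge_zero P2u norm_ge_zero Gap P3u]
    by (simp only: sin_vangle_eq power_divide)
qed

lemma sin_vangle_le_R1_gap:
  assumes gap: "0 < gap" and Gap: "norm_R2\<^sup>2 / gap < Gap"
  shows "sin (vangle u (ritz 1)) \<le> norm_R1 / (Gap - norm_R2\<^sup>2 / gap) * sqrt (1 + norm_R2\<^sup>2 / gap\<^sup>2)"
proof -
  have P2u: "norm (P2 u) \<le> norm_R2 / gap * norm (P3 u)"
    using gap_estimate gap by (simp add: field_simps)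
  have "Gap * norm (P3 u) \<le> norm (P3 (A (P1 u))) + norm (P3 (A (P2 u)))"
    using Gap_estimate norm_triangle_ineq[of "P3 (A (P1 u))" "P3 (A (P2 u))"] by linarith
  also have "\<dots> \<le> norm_R1 + norm_R2 * norm (P2 u)"
    using norm_R1_bound[of u] norm_R2_bound[of "P2 u"] unorm by (simp add: P2_id[OF P2_in_Q2])
  also have "\<dots> \<le> norm_R1 + norm_R2 * (norm_R2 / gap * norm (P3 u))"
    by (rule add_left_mono, rule mult_left_mono[OF P2u norm_R2_nonneg])
  finally have "(Gap - norm_R2\<^sup>2 / gap) * norm (P3 u) \<le> norm_R1"
    by (simp add: power2_eq_square algebra_simps)
  moreover have "0 < Gap - norm_R2\<^sup>2 / gap" using Gap by simp
  ultimately show ?thesis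
    using sqrt_sum_squares_le_of_bounds[OF norm_ge_zero P2u norm_ge_zero]
    by (simp only: sin_vangle_eq power_divide)
qed

lemma sin_vangle_le_R1_sum:
  assumes ne: "\<forall>i\<in>{2..k}. lam \<noteq> complex_of_real (lh i)"
    and Gap: "(\<Sum>i=2..k. (norm_r i)\<^sup>2 / cmod (lam - complex_of_real (lh i))) < Gap"
  shows "sin (vangle u (ritz 1))
         \<le> norm_R1 / (Gap - (\<Sum>i=2..k. (norm_r i)\<^sup>2 / cmod (lam - complex_of_real (lh i))))
            * sqrt (1 + (\<Sum>i=2..k. norm_r i / cmod (lam - complex_of_real (lh i)))\<^sup>2)"
proof -
  define d where "d i = cmod (lam - complex_of_real (lh i))" for i
  define c where "c i = cinner (ritz i) u" for i
  define S1 where "S1 = (\<Sum>i=2..k. norm_r i / d i)"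
  define S2 where "S2 = (\<Sum>i=2..k. (norm_r i)\<^sup>2 / d i)"
  have d_pos: "0 < d i" if "i \<in> {2..k}" for i using ne that by (simp add: d_def)
  have c_le: "cmod (c i) \<le> norm_r i / d i * norm (P3 u)" if i: "i \<in> {2..k}" for i
    using ritz_coeff_estimate[OF i] d_pos[OF i] by (simp add: c_def d_def field_simps)
  have "norm (P2 u) \<le> (\<Sum>i=2..k. cmod (c i) * norm (ritz i))"
    unfolding P2_eq c_def[symmetric] using norm_sum[of "\<lambda>i. c i *\<^sub>C ritz i" "{2..k}"] by simp
  also have "\<dots> \<le> (\<Sum>i=2..k. norm_r i / d i * norm (P3 u))"
    using c_le norm_ritz by (intro sum_mono) simp
  finally have P2u: "norm (P2 u) \<le> S1 * norm (P3 u)" by (simp add: S1_def sum_distrib_right)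
  have "norm (P3 (A (P2 u))) \<le> (\<Sum>i=2..k. cmod (c i) * norm (resid i))"
    unfolding R2_apply c_def[symmetric] using norm_sum[of "\<lambda>i. c i *\<^sub>C resid i" "{2..k}"] by simp
  also have "\<dots> \<le> (\<Sum>i=2..k. (norm_r i)\<^sup>2 / d i * norm (P3 u))"
  proof (intro sum_mono)
    fix i assume i: "i \<in> {2..k}"
    have "cmod (c i) * norm (resid i) \<le> (norm_r i / d i * norm (P3 u)) * norm_r i"
      using c_le[OF i] norm_resid_le[OF i] norm_r_nonneg[OF i] d_pos[OF i] by (intro mult_mono) auto
    then show "cmod (c i) * norm (resid i) \<le> (norm_r i)\<^sup>2 / d i * norm (P3 u)"
      by (simp add: power2_eq_square mult_ac)
  qed
  finally have "norm (P3 (A (P2 u))) \<le> S2 * norm (P3 u)" by (simp add: S2_def sum_distrib_right)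
  moreover have "Gap * norm (P3 u) \<le> norm_R1 + norm (P3 (A (P2 u)))"
    using Gap_estimate norm_triangle_ineq[of "P3 (A (P1 u))" "P3 (A (P2 u))"] norm_R1_bound[of u] unorm
    by simp
  ultimately have "(Gap - S2) * norm (P3 u) \<le> norm_R1" by (simp add: algebra_simps)
  moreover have "0 < Gap - S2" using Gap by (simp add: S2_def d_def)
  ultimately show ?thesis
    using sqrt_sum_squares_le_of_bounds[OF norm_ge_zero P2u norm_ge_zero]
    by (simp only: sin_vangle_eq S1_def S2_def d_def)
qed

end

theorem theorem7p1:
  fixes D :: "'a::{complex_inner, complete_space} set"
    and A :: "'a \<Rightarrow> 'a"
    and k :: nat
    and q :: "nat \<Rightarrow> 'a"
    and \<Omega> :: "nat \<Rightarrow> nat \<Rightarrow> complex"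
    and lh :: "nat \<Rightarrow> real"
    and u :: 'a
    and lam :: complex
  assumes sa: "self_adjoint_op D A"
    and k2: "k \<ge> 2"
    and qD: "\<forall>i\<in>{1..k}. q i \<in> D"
    and q_orthonormal: "\<forall>i\<in>{1..k}. \<forall>j\<in>{1..k}. cinner (q i) (q j) = (if i = j then 1 else 0)"
    and \<Omega>_unitary: "\<forall>i\<in>{1..k}. \<forall>j\<in>{1..k}.
                     (\<Sum>l=1..k. cnj (\<Omega> l i) * \<Omega> l j) = (if i = j then 1 else 0)"
    and eigdecomp: "\<forall>i\<in>{1..k}. \<forall>j\<in>{1..k}.
                     cinner (q i) (A (q j)) = (\<Sum>l=1..k. \<Omega> i l * complex_of_real (lh l) * cnj (\<Omega> j l))"
    and uD: "u \<in> D"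
    and eig: "A u = lam *\<^sub>C u"
    and unorm: "norm u = 1"
  shows
    "let uh = (\<lambda>j. \<Sum>i=1..k. \<Omega> i j *\<^sub>C q i);
         Q = cspan (q ` {1..k});
         P1 = orth_proj (cspan {uh 1});
         Q2 = cspan (uh ` {2..k});
         P2 = orth_proj Q2;
         Q3 = orth_compl Q;
         P3 = orth_proj Q3;
         P2i = (\<lambda>i. orth_proj (cspan {uh i}));
         nR = onorm (\<lambda>x. P3 (A (P1 x)) + P3 (A (P2 x)));
         nR1 = onorm (\<lambda>x. P3 (A (P1 x)));
         nR2 = onorm (\<lambda>x. P3 (A (P2 x)));
         nr = (\<lambda>i. onorm (\<lambda>x. P3 (A (P2 (P2i i x)))));
         gap = spec_dist lam (op_spectrum Q2 Q2 (\<lambda>x. P2 (A (P2 x))));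
         Gap = spec_dist lam (op_spectrum Q3 (D \<inter> Q3) (\<lambda>x. P3 (A (P3 x))));
         s = sin (vangle u (uh 1));
         S2 = (\<Sum>i=2..k. (nr i)\<^sup>2 / cmod (lam - complex_of_real (lh i)));
         S1 = (\<Sum>i=2..k. nr i / cmod (lam - complex_of_real (lh i)))
     in (Gap > 0 \<and> gap > 0 \<longrightarrow>
           s \<le> nR / Gap * sqrt (1 + nR2\<^sup>2 / gap\<^sup>2) \<and>
           nR / Gap * sqrt (1 + nR2\<^sup>2 / gap\<^sup>2) \<le> nR / Gap * (1 + nR2 / gap))
      \<and> (gap > 0 \<and> Gap > nR2\<^sup>2 / gap \<longrightarrow>
           s \<le> nR1 / (Gap - nR2\<^sup>2 / gap) * sqrt (1 + nR2\<^sup>2 / gap\<^sup>2))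
      \<and> ((\<forall>i\<in>{2..k}. lam \<noteq> complex_of_real (lh i)) \<and> Gap > S2 \<longrightarrow>
           s \<le> nR1 / (Gap - S2) * sqrt (1 + S1\<^sup>2))"
proof -
  interpret ritz_eigenpair D A k q \<Omega> lh u lam
    by unfold_locales (fact sa k2 qD q_orthonormal \<Omega>_unitary eigdecomp uD eig unorm)+
  note defs = ritz_def[abs_def] Q2_def Q3_def P1_def P2_def P3_def norm_R_def norm_R1_def norm_R2_def
    norm_r_def[abs_def] gap_def Gap_def
  have "norm_R / Gap * sqrt (1 + norm_R2\<^sup>2 / gap\<^sup>2) \<le> norm_R / Gap * (1 + norm_R2 / gap)"
    if "0 < Gap" "0 < gap"
    using sqrt_sum_squares_le_sum[of 1 "norm_R2 / gap"] norm_R_nonneg norm_R2_nonneg that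
    by (intro mult_left_mono) (simp_all add: power_divide)
  with sin_vangle_le_R sin_vangle_le_R1_gap sin_vangle_le_R1_sum show ?thesis
    unfolding Let_def by (simp only: defs) blast
qed

end
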